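(* Let $\mathcal G=\bigl(\ast_{i\in I}\mathbb Z\bigr)\ast\bigl(\ast_{j\in J}\mathbb Z/2\mathbb Z\bigr)=\langle x_i,y_j\mid y_j^2\rangle$ with generating system $X=\{x_i\}_{i\in I}\sqcup\{y_j\}_{j\in J}$, let $\mathcal H\le\mathcal G$ and $\Gamma=\mathrm{Sch}(\mathcal G,\mathcal H,X)$. Then $\Gamma$ is vertex-transitive (by graph automorphisms, not necessarily label-preserving) if and only if $\mathcal H$ is length-transitive.
   Context: Graphs have vertex set $V$, edge set $E$, initial-vertex map $\iota$ and an involution $e\mapsto\bar e$ (inverse edge); loops, multiple edges and edges with $\bar e=e$ are allowed. The Schreier graph $\mathrm{Sch}(\mathcal A,\mathcal H,X)$ of a subgroup $\mathcal H$ of a group $\mathcal A$ with generating system $X$ has vertices the right cosets $\mathcal Hg$ and, for each coset $\mathcal Hg$ and each $x$ with $x\in X$ or $x^{-1}\in X$, an edge labeled $x$ from $\mathcal Hg$ to $\mathcal Hgx$ whose inverse is the edge labeled $x^{-1}$ from $\mathcal Hgx$. The length $|g|_X$ is the minimal number of factors from $X\cup X^{-1}$ needed to write $g$. A subgroup $\mathcal H\le\mathcal G$ is length-transitive if for every $g\in\mathcal G$ there is a group isomorphism $\alpha_g:\mathcal H\to g^{-1}\mathcal Hg$ with $|\alpha_g(h)|_X=|h|_X$ for all $h\in\mathcal H$. *)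

theory Defs
  imports "HOL-Algebra.Algebra"
begin

text \<open>Letters: Xg i True is x_i, Xg i False is x_i^{-1}, Yg j is y_j (= y_j^{-1}).
  These are exactly the elements of X \<union> X^{-1}.\<close>
datatype ('i,'j) gen = Xg 'i bool | Yg 'j

fun ginv :: "('i,'j) gen \<Rightarrow> ('i,'j) gen" where
  "ginv (Xg i b) = Xg i (\<not> b)"
| "ginv (Yg j) = Yg j"

definition gens :: "'i set \<Rightarrow> 'j set \<Rightarrow> ('i,'j) gen set" where
  "gens I J = {a. case a of Xg i _ \<Rightarrow> i \<in> I | Yg j \<Rightarrow> j \<in> J}"

fun reduced :: "('i,'j) gen list \<Rightarrow> bool" where
  "reduced [] = True"
| "reduced [a] = True"
| "reduced (a # b # w) = (b \<noteq> ginv a \<and> reduced (b # w))"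

definition reduce :: "('i,'j) gen list \<Rightarrow> ('i,'j) gen list" where
  "reduce w = foldr (\<lambda>a acc. case acc of [] \<Rightarrow> [a]
                       | b # r \<Rightarrow> (if b = ginv a then r else a # b # r)) w []"

definition FP :: "'i set \<Rightarrow> 'j set \<Rightarrow> ('i,'j) gen list monoid" where
  "FP I J = \<lparr> carrier = {w. set w \<subseteq> gens I J \<and> reduced w},
             monoid.mult = (\<lambda>u v. reduce (u @ v)), monoid.one = [] \<rparr>"

definition word_length :: "'i set \<Rightarrow> 'j set \<Rightarrow> ('i,'j) gen list \<Rightarrow> nat" where
  "word_length I J g = (LEAST n. \<exists>w. length w = n \<and> set w \<subseteq> gens I J \<and>
      foldr (\<lambda>a acc. [a] \<otimes>\<^bsub>FP I J\<^esub> acc) w \<one>\<^bsub>FP I J\<^esub> = g)"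

definition length_transitive :: "'i set \<Rightarrow> 'j set \<Rightarrow> ('i,'j) gen list set \<Rightarrow> bool" where
  "length_transitive I J H \<longleftrightarrow>
     (\<forall>g \<in> carrier (FP I J). \<exists>\<alpha>.
        \<alpha> \<in> iso ((FP I J)\<lparr>carrier := H\<rparr>)
              ((FP I J)\<lparr>carrier := (\<lambda>h. inv\<^bsub>FP I J\<^esub> g \<otimes>\<^bsub>FP I J\<^esub> h \<otimes>\<^bsub>FP I J\<^esub> g) ` H\<rparr>)
        \<and> (\<forall>h \<in> H. word_length I J (\<alpha> h) = word_length I J h))"

record ('v,'e) sgraph =
  verts :: "'v set"
  edges :: "'e set"
  init :: "'e \<Rightarrow> 'v"
  einv :: "'e \<Rightarrow> 'e"

definition graph_aut :: "('v,'e) sgraph \<Rightarrow> ('v \<Rightarrow> 'v) \<Rightarrow> ('e \<Rightarrow> 'e) \<Rightarrow> bool" where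
  "graph_aut \<Gamma> fv fe \<longleftrightarrow>
     bij_betw fv (verts \<Gamma>) (verts \<Gamma>) \<and> bij_betw fe (edges \<Gamma>) (edges \<Gamma>) \<and>
     (\<forall>e \<in> edges \<Gamma>. init \<Gamma> (fe e) = fv (init \<Gamma> e) \<and> einv \<Gamma> (fe e) = fe (einv \<Gamma> e))"

definition vertex_transitive :: "('v,'e) sgraph \<Rightarrow> bool" where
  "vertex_transitive \<Gamma> \<longleftrightarrow>
     (\<forall>u \<in> verts \<Gamma>. \<forall>v \<in> verts \<Gamma>. \<exists>fv fe. graph_aut \<Gamma> fv fe \<and> fv u = v)"

text \<open>Schreier graph Sch(G,H,X): vertices are right cosets Hg; the edge (C,a) is the edge
  labelled a from C to C a; its inverse is the edge labelled a^{-1} from C a.\<close>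
definition schreier :: "'i set \<Rightarrow> 'j set \<Rightarrow> ('i,'j) gen list set \<Rightarrow>
    (('i,'j) gen list set, ('i,'j) gen list set \<times> ('i,'j) gen) sgraph" where
  "schreier I J H = \<lparr> verts = rcosets\<^bsub>FP I J\<^esub> H,
     edges = {(C, a). C \<in> rcosets\<^bsub>FP I J\<^esub> H \<and> a \<in> gens I J},
     init = fst,
     einv = (\<lambda>(C, a). (C #>\<^bsub>FP I J\<^esub> [a], ginv a)) \<rparr>"

end

theory Submission
  imports Defs
begin

text \<open>Elements of the free product are reduced words, i.e. vertices of its Cayley tree, and a path
  in the Schreier graph from the vertex \<open>H\<close> is a word read from \<open>H\<close>.

  If a graph automorphism sends \<open>H\<close> to \<open>H g\<close>, reading the labels along the image of each path
  relabels words; since edge inverses are preserved this commutes with free reduction, and on the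
  closed reduced paths at \<open>H\<close>, i.e. on \<open>H\<close>, it is a length-preserving isomorphism onto
  \<open>g\<inverse> H g\<close>.

  Conversely let \<open>\<alpha> : H \<rightarrow> g\<inverse> H g\<close> preserve lengths. As \<open>|h\<inverse> h'|\<close> determines the common prefix
  of \<open>h\<close> and \<open>h'\<close>, \<open>\<alpha>\<close> preserves common prefixes and so extends to the prefixes of elements of
  \<open>H\<close>. When these prefixes, and those of \<open>g\<inverse> H g\<close>, exhaust the group, the extension is an
  automorphism \<open>\<phi>\<close> of the Cayley tree with \<open>\<phi> (h p) = \<alpha> h \<phi> p\<close>, and \<open>H p \<mapsto> H g \<phi> p\<close> is an
  automorphism of the Schreier graph. They do exhaust it unless \<open>H\<close> is trivial (then take
  \<open>\<phi> = id\<close>) or the group is \<open>\<int>/2\<close> (then there is one vertex): a reduced word \<open>q a\<close> just outside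
  the prefixes of a conjugate \<open>K\<close> would give conjugates of \<open>K\<close> all of whose nontrivial elements
  are arbitrarily long, while \<open>\<alpha>\<close> keeps the length of a fixed nontrivial element of \<open>H\<close>.\<close>

lemma ginv_ginv [simp]: "ginv (ginv a) = a"
  by (cases a) auto

lemma ginv_gens [simp]: "ginv a \<in> gens I J \<longleftrightarrow> a \<in> gens I J"
  by (cases a) (auto simp: gens_def)

section \<open>Reduced words\<close>

definition cancel_cons :: "('i,'j) gen \<Rightarrow> ('i,'j) gen list \<Rightarrow> ('i,'j) gen list" where
  "cancel_cons a w = (case w of [] \<Rightarrow> [a] | b # r \<Rightarrow> (if b = ginv a then r else a # b # r))"

lemma reduce_Nil [simp]: "reduce [] = []"
  by (simp add: reduce_def)

lemma reduce_Cons: "reduce (a # w) = cancel_cons a (reduce w)"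
  by (simp add: reduce_def cancel_cons_def)

lemma reduced_Cons: "reduced (a # w) \<longleftrightarrow> reduced w \<and> (w \<noteq> [] \<longrightarrow> hd w \<noteq> ginv a)"
  by (cases w) auto

lemma reduced_append:
  "reduced (u @ v) \<longleftrightarrow> reduced u \<and> reduced v \<and> (u \<noteq> [] \<longrightarrow> v \<noteq> [] \<longrightarrow> hd v \<noteq> ginv (last u))"
  by (induction u) (auto simp: reduced_Cons)

lemma reduced_take: "reduced w \<Longrightarrow> reduced (take k w)"
  by (metis append_take_drop_id reduced_append)

lemma reduced_drop: "reduced w \<Longrightarrow> reduced (drop k w)"
  by (metis append_take_drop_id reduced_append)

lemma reduced_cancel_cons: "reduced w \<Longrightarrow> reduced (cancel_cons a w)"
  by (cases w) (auto simp: cancel_cons_def reduced_Cons)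

lemma reduced_reduce: "reduced (reduce w)"
  by (induction w) (auto simp: reduce_Cons reduced_cancel_cons)

lemma cancel_cons_reduced: "reduced (a # w) \<Longrightarrow> cancel_cons a w = a # w"
  by (cases w) (auto simp: cancel_cons_def)

lemma reduce_reduced: "reduced w \<Longrightarrow> reduce w = w"
  by (induction w) (auto simp: reduce_Cons reduced_Cons cancel_cons_reduced)

lemma reduce_singleton [simp]: "reduce [a] = [a]"
  by (simp add: reduce_Cons cancel_cons_def)

lemma reduce_idem [simp]: "reduce (reduce w) = reduce w"
  by (simp add: reduce_reduced reduced_reduce)

lemma cancel_cons_ginv: "reduced w \<Longrightarrow> cancel_cons a (cancel_cons (ginv a) w) = w"
  by (cases w) (auto simp: cancel_cons_def reduced_Cons neq_Nil_conv split: list.splits)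

lemma reduce_append_reduce_right: "reduce (u @ reduce v) = reduce (u @ v)"
  by (induction u) (auto simp: reduce_Cons)

lemma reduce_cancel_cons_append: "reduce (cancel_cons a r @ v) = cancel_cons a (reduce (r @ v))"
proof (cases r)
  case (Cons b r')
  show ?thesis
  proof (cases "b = ginv a")
    case True
    then have "cancel_cons a (reduce (r @ v)) = cancel_cons a (cancel_cons (ginv a) (reduce (r' @ v)))"
      using Cons by (simp add: reduce_Cons)
    also have "\<dots> = reduce (r' @ v)"
      by (rule cancel_cons_ginv[OF reduced_reduce])
    finally show ?thesis using Cons True by (simp add: cancel_cons_def)
  qed (use Cons in \<open>simp add: cancel_cons_def reduce_Cons\<close>)
qed (simp add: cancel_cons_def reduce_Cons)

lemma reduce_append_reduce_left: "reduce (reduce u @ v) = reduce (u @ v)"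
  by (induction u) (auto simp: reduce_Cons reduce_cancel_cons_append)

lemma set_reduce: "set (reduce w) \<subseteq> set w"
  by (induction w) (auto simp: reduce_Cons cancel_cons_def split: list.splits)

lemma length_reduce: "length (reduce w) \<le> length w"
  by (induction w) (auto simp: reduce_Cons cancel_cons_def split: list.splits)

definition winv :: "('i,'j) gen list \<Rightarrow> ('i,'j) gen list" where
  "winv w = rev (map ginv w)"

lemma winv_simps [simp]:
  "winv [] = []" "winv (a # w) = winv w @ [ginv a]" "winv (u @ v) = winv v @ winv u"
  "winv (winv w) = w" "length (winv w) = length w" "set (winv w) = ginv ` set w"
  by (auto simp: winv_def rev_map[symmetric] map_map o_def)

lemma winv_eq_Nil_iff [simp]: "winv w = [] \<longleftrightarrow> w = []"
  by (simp add: winv_def)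

lemma hd_winv: "w \<noteq> [] \<Longrightarrow> hd (winv w) = ginv (last w)"
  by (simp add: winv_def hd_rev last_map)

lemma last_winv: "w \<noteq> [] \<Longrightarrow> last (winv w) = ginv (hd w)"
  by (simp add: winv_def last_rev hd_map)

lemma nth_winv: "i < length w \<Longrightarrow> winv w ! i = ginv (w ! (length w - Suc i))"
  by (simp add: winv_def rev_nth)

lemma take_winv: "k \<le> length w \<Longrightarrow> take k (winv w) = winv (drop (length w - k) w)"
  by (simp add: winv_def take_rev drop_map)

lemma reduced_winv: "reduced w \<Longrightarrow> reduced (winv w)"
  by (induction w) (auto simp: reduced_Cons reduced_append winv_def hd_map hd_rev last_map last_rev)

lemma reduce_cancel_pair: "reduce (u @ [a, ginv a] @ v) = reduce (u @ v)"
proof -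
  have "reduce ([a, ginv a] @ v) = reduce v"
    using cancel_cons_ginv[OF reduced_reduce, of a v] by (simp add: reduce_Cons)
  then show ?thesis
    by (metis reduce_append_reduce_right)
qed

lemma reduce_cancel_winv: "reduce (u @ winv w @ w @ v) = reduce (u @ v)"
proof (induction w arbitrary: u v rule: rev_induct)
  case (snoc a w)
  have "reduce (u @ winv (w @ [a]) @ (w @ [a]) @ v) = reduce ((u @ [ginv a]) @ winv w @ w @ ([a] @ v))"
    by simp
  also have "\<dots> = reduce ((u @ [ginv a]) @ [a] @ v)"
    using snoc.IH by blast
  also have "\<dots> = reduce (u @ v)"
    using reduce_cancel_pair[of u "ginv a" v] by simp
  finally show ?case .
qed simp

lemma reduce_cancel_winv': "reduce (u @ w @ winv w @ v) = reduce (u @ v)"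
  using reduce_cancel_winv[of u "winv w" v] by simp

fun lcp :: "'a list \<Rightarrow> 'a list \<Rightarrow> nat" where
  "lcp (a # u) (b # v) = (if a = b then Suc (lcp u v) else 0)"
| "lcp _ _ = 0"

lemma lcp_sym: "lcp u v = lcp v u"
  by (induction u v rule: lcp.induct) auto

lemma lcp_le_length: "lcp u v \<le> length u" "lcp u v \<le> length v"
  by (induction u v rule: lcp.induct) auto

lemma take_lcp: "take (lcp u v) u = take (lcp u v) v"
  by (induction u v rule: lcp.induct) auto

lemma nth_lcp_neq: "lcp u v < length u \<Longrightarrow> lcp u v < length v \<Longrightarrow> u ! lcp u v \<noteq> v ! lcp u v"
  by (induction u v rule: lcp.induct) auto

lemma take_eq_iff_le_lcp:
  "k \<le> length u \<Longrightarrow> k \<le> length v \<Longrightarrow> take k u = take k v \<longleftrightarrow> k \<le> lcp u v"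
proof (induction u v arbitrary: k rule: lcp.induct)
  case (1 a u b v)
  then show ?case by (cases k) auto
qed auto

lemma lcp_take: "lcp (take k u) v = min k (lcp u v)"
proof (induction u v arbitrary: k rule: lcp.induct)
  case (1 a u b v)
  then show ?case by (cases k) auto
qed (auto simp: lcp.simps(2,3))

lemma lcp_take_take: "lcp (take k u) (take k' v) = min k (min k' (lcp u v))"
  by (metis lcp_sym lcp_take)

lemma lcp_refl: "lcp u u = length u"
  by (induction u) auto

lemma reduce_append_reduced:
  assumes u: "reduced u" and v: "reduced v"
  defines "c \<equiv> lcp (winv u) v"
  shows "reduce (u @ v) = take (length u - c) u @ drop c v"
proof -
  have cu: "c \<le> length u" and cv: "c \<le> length v"
    using lcp_le_length[of "winv u" v] by (auto simp: c_def)
  define s where "s = drop (length u - c) u"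
  define u' where "u' = take (length u - c) u"
  have "winv s = take c v"
    using take_lcp[of "winv u" v] take_winv[OF cu] by (simp add: s_def c_def)
  then have "reduce (u @ v) = reduce (u' @ s @ winv s @ drop c v)"
    by (metis append_take_drop_id append_assoc s_def u'_def)
  also have "\<dots> = reduce (u' @ drop c v)"
    by (rule reduce_cancel_winv')
  also have "\<dots> = u' @ drop c v"
  proof (rule reduce_reduced, subst reduced_append, intro conjI impI)
    show "reduced u'" "reduced (drop c v)"
      using u v by (simp_all add: u'_def reduced_take reduced_drop)
    assume ne: "u' \<noteq> []" "drop c v \<noteq> []"
    then have lt: "c < length u" "c < length v"
      using cu by (auto simp: u'_def)
    then have "winv u ! c \<noteq> v ! c"
      using nth_lcp_neq[of "winv u" v] by (simp add: c_def)
    then show "hd (drop c v) \<noteq> ginv (last u')"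
      using ne lt by (simp add: u'_def last_conv_nth hd_drop_conv_nth nth_winv)
  qed
  finally show ?thesis
    by (simp add: u'_def)
qed

lemma length_reduce_append_reduced:
  assumes "reduced u" "reduced v"
  shows "length (reduce (u @ v)) = length u + length v - 2 * lcp (winv u) v"
  using reduce_append_reduced[OF assms] lcp_le_length[of "winv u" v] by simp

lemma reduce_append_take:
  assumes u: "reduced u" and v: "reduced v" and j: "j \<le> length v"
  defines "c \<equiv> lcp (winv u) v"
  shows "reduce (u @ take j v) = (if j \<le> c then take (length u - j) u
                                 else take (length u - c + (j - c)) (reduce (u @ v)))"
proof -
  have cu: "c \<le> length u"
    using lcp_le_length(1)[of "winv u" v] by (simp add: c_def)
  have "lcp (winv u) (take j v) = min j c"
    by (metis c_def lcp_take lcp_sym)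
  then have "reduce (u @ take j v) = take (length u - min j c) u @ drop (min j c) (take j v)"
    using reduce_append_reduced[OF u reduced_take[OF v]] by simp
  then show ?thesis
    using reduce_append_reduced[OF u v] cu by (simp add: c_def drop_take)
qed

section \<open>The free product as a group\<close>

lemma FP_carrier: "carrier (FP I J) = {w. set w \<subseteq> gens I J \<and> reduced w}"
  by (simp add: FP_def)

lemma FP_mult: "x \<otimes>\<^bsub>FP I J\<^esub> y = reduce (x @ y)"
  by (simp add: FP_def)

lemma FP_one: "\<one>\<^bsub>FP I J\<^esub> = []"
  by (simp add: FP_def)

lemma reduce_in_carrier: "set w \<subseteq> gens I J \<Longrightarrow> reduce w \<in> carrier (FP I J)"
  using set_reduce[of w] by (auto simp: FP_carrier reduced_reduce)

lemma winv_in_carrier: "w \<in> carrier (FP I J) \<Longrightarrow> winv w \<in> carrier (FP I J)"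
  by (auto simp: FP_carrier reduced_winv)

lemma singleton_in_carrier: "a \<in> gens I J \<Longrightarrow> [a] \<in> carrier (FP I J)"
  by (simp add: FP_carrier)

lemma take_in_carrier: "w \<in> carrier (FP I J) \<Longrightarrow> take k w \<in> carrier (FP I J)"
  by (auto simp: FP_carrier reduced_take dest: in_set_takeD)

lemma FP_group: "group (FP I J)"
proof (rule groupI)
  fix x y assume "x \<in> carrier (FP I J)" "y \<in> carrier (FP I J)"
  then show "x \<otimes>\<^bsub>FP I J\<^esub> y \<in> carrier (FP I J)"
    by (auto simp: FP_mult FP_carrier intro!: reduce_in_carrier[simplified FP_carrier, simplified])
next
  fix x y z
  show "x \<otimes>\<^bsub>FP I J\<^esub> y \<otimes>\<^bsub>FP I J\<^esub> z = x \<otimes>\<^bsub>FP I J\<^esub> (y \<otimes>\<^bsub>FP I J\<^esub> z)"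
    by (simp add: FP_mult reduce_append_reduce_left reduce_append_reduce_right)
next
  fix x assume "x \<in> carrier (FP I J)"
  then show "\<one>\<^bsub>FP I J\<^esub> \<otimes>\<^bsub>FP I J\<^esub> x = x"
    by (simp add: FP_mult FP_one FP_carrier reduce_reduced)
  show "\<exists>y\<in>carrier (FP I J). y \<otimes>\<^bsub>FP I J\<^esub> x = \<one>\<^bsub>FP I J\<^esub>"
    using winv_in_carrier[OF \<open>x \<in> carrier (FP I J)\<close>] reduce_cancel_winv[of "[]" x "[]"]
    by (auto simp: FP_mult FP_one)
qed (simp add: FP_carrier FP_one)

lemma (in group) inv_mult_cancel_left: "x \<in> carrier G \<Longrightarrow> y \<in> carrier G \<Longrightarrow> inv x \<otimes> (x \<otimes> y) = y"
  by (simp add: m_assoc[symmetric])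

lemma (in group) mult_inv_cancel_left: "x \<in> carrier G \<Longrightarrow> y \<in> carrier G \<Longrightarrow> x \<otimes> (inv x \<otimes> y) = y"
  by (simp add: m_assoc[symmetric])

interpretation FP: group "FP I J" for I J
  by (rule FP_group)

lemma FP_inv: "x \<in> carrier (FP I J) \<Longrightarrow> inv\<^bsub>FP I J\<^esub> x = winv x"
  using winv_in_carrier[of x] reduce_cancel_winv[of "[]" x "[]"]
  by (intro FP.inv_equality) (auto simp: FP_mult FP_one)

lemma FP_mult_reduced: "reduced (x @ y) \<Longrightarrow> x \<otimes>\<^bsub>FP I J\<^esub> y = x @ y"
  by (simp add: FP_mult reduce_reduced)

lemma conj_Nil: "g \<in> carrier (FP I J) \<Longrightarrow> inv\<^bsub>FP I J\<^esub> g \<otimes>\<^bsub>FP I J\<^esub> [] \<otimes>\<^bsub>FP I J\<^esub> g = []"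
  using FP.r_one[of "inv\<^bsub>FP I J\<^esub> g" I J] FP.l_inv[of g I J] by (simp add: FP_one)

lemma conj_eq_Nil_iff:
  assumes "q \<in> carrier (FP I J)" "h \<in> carrier (FP I J)"
  shows "inv\<^bsub>FP I J\<^esub> q \<otimes>\<^bsub>FP I J\<^esub> h \<otimes>\<^bsub>FP I J\<^esub> q = [] \<longleftrightarrow> h = []"
proof
  assume "inv\<^bsub>FP I J\<^esub> q \<otimes>\<^bsub>FP I J\<^esub> h \<otimes>\<^bsub>FP I J\<^esub> q = []"
  moreover have "h = q \<otimes>\<^bsub>FP I J\<^esub> (inv\<^bsub>FP I J\<^esub> q \<otimes>\<^bsub>FP I J\<^esub> h \<otimes>\<^bsub>FP I J\<^esub> q) \<otimes>\<^bsub>FP I J\<^esub> inv\<^bsub>FP I J\<^esub> q"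
    using assms by (simp add: FP.m_assoc FP.mult_inv_cancel_left)
  ultimately have "h = q \<otimes>\<^bsub>FP I J\<^esub> [] \<otimes>\<^bsub>FP I J\<^esub> inv\<^bsub>FP I J\<^esub> q"
    by simp
  also have "\<dots> = []"
    using FP.r_one[OF assms(1)] FP.r_inv[OF assms(1)] by (simp add: FP_one)
  finally show "h = []" .
qed (use assms conj_Nil in blast)

lemma singleton_mult_ginv: "[a] \<otimes>\<^bsub>FP I J\<^esub> [ginv a] = \<one>\<^bsub>FP I J\<^esub>"
  using reduce_cancel_pair[of "[]" a "[]"] by (simp add: FP_mult FP_one)

lemma singleton_inv: "a \<in> gens I J \<Longrightarrow> inv\<^bsub>FP I J\<^esub> [a] = [ginv a]"
  by (simp add: FP_inv singleton_in_carrier)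

lemma word_length_eq_length: "x \<in> carrier (FP I J) \<Longrightarrow> word_length I J x = length x"
proof -
  have product: "foldr (\<lambda>a acc. [a] \<otimes>\<^bsub>FP I J\<^esub> acc) w \<one>\<^bsub>FP I J\<^esub> = reduce w" for w
    by (induction w) (simp_all add: FP_mult FP_one reduce_Cons reduce_append_reduce_right[of "[_]", simplified])
  assume "x \<in> carrier (FP I J)"
  then show ?thesis
    unfolding word_length_def product
    by (intro Least_equality) (auto simp: FP_carrier reduce_reduced length_reduce)
qed

text \<open>Word length of \<open>p\<inverse> q\<close> is the distance of \<open>p\<close> and \<open>q\<close> in the Cayley tree.\<close>

lemma length_inv_mult:
  assumes "p \<in> carrier (FP I J)" "q \<in> carrier (FP I J)"
  shows "length (inv\<^bsub>FP I J\<^esub> p \<otimes>\<^bsub>FP I J\<^esub> q) = length p + length q - 2 * lcp p q"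
  using assms length_reduce_append_reduced[of "winv p" q]
  by (simp add: FP_inv FP_mult FP_carrier reduced_winv)

lemma length_one_in_carrier:
  assumes "x \<in> carrier (FP I J)" "length x = 1"
  obtains b where "b \<in> gens I J" "x = [b]"
  using assms by (cases x) (auto simp: FP_carrier)

lemma long_reduced_word:
  assumes "\<nexists>b. gens I J = {b}" and "a \<in> gens I J"
  shows "\<exists>z. set z \<subseteq> gens I J \<and> reduced (a # z) \<and> length z = N"
  using assms(2)
proof (induction N arbitrary: a)
  case (Suc N)
  have "ginv a \<in> gens I J" "gens I J \<noteq> {ginv a}"
    using assms(1) Suc.prems by auto
  then obtain c where c: "c \<in> gens I J" "c \<noteq> ginv a"
    by blast
  then obtain z where "set z \<subseteq> gens I J" "reduced (c # z)" "length z = N"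
    using Suc.IH by blast
  with c show ?case
    by (intro exI[of _ "c # z"]) auto
qed auto

lemma carrier_single_generator:
  assumes "gens I J = {a}"
  shows "carrier (FP I J) = {[], [a]}"
proof -
  have aa: "ginv a = a"
    using assms ginv_gens[of a I J] by auto
  have "w = [] \<or> w = [a]" if "w \<in> carrier (FP I J)" for w
  proof -
    have "set w \<subseteq> {a}" "reduced w"
      using that assms by (auto simp: FP_carrier)
    then show ?thesis
      using aa by (cases w rule: remdups_adj.cases) auto
  qed
  then show ?thesis
    using assms by (auto simp: FP_carrier)
qed

section \<open>Automorphisms of Schreier graphs\<close>

lemma graph_aut_id: "graph_aut \<Gamma> id id"
  by (simp add: graph_aut_def)

lemma graph_aut_comp:
  assumes "graph_aut \<Gamma> fv fe" "graph_aut \<Gamma> fv' fe'"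
  shows "graph_aut \<Gamma> (fv' \<circ> fv) (fe' \<circ> fe)"
  using assms unfolding graph_aut_def by (auto intro: bij_betw_trans simp: bij_betwE)

lemma graph_aut_inv:
  assumes aut: "graph_aut \<Gamma> fv fe"
    and closed: "\<And>e. e \<in> edges \<Gamma> \<Longrightarrow> init \<Gamma> e \<in> verts \<Gamma> \<and> einv \<Gamma> e \<in> edges \<Gamma>"
  shows "graph_aut \<Gamma> (inv_into (verts \<Gamma>) fv) (inv_into (edges \<Gamma>) fe)"
proof -
  have bv: "bij_betw fv (verts \<Gamma>) (verts \<Gamma>)" and be: "bij_betw fe (edges \<Gamma>) (edges \<Gamma>)"
    and compat: "\<And>e. e \<in> edges \<Gamma> \<Longrightarrow> init \<Gamma> (fe e) = fv (init \<Gamma> e) \<and> einv \<Gamma> (fe e) = fe (einv \<Gamma> e)"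
    using aut by (auto simp: graph_aut_def)
  have "init \<Gamma> (inv_into (edges \<Gamma>) fe e) = inv_into (verts \<Gamma>) fv (init \<Gamma> e)
        \<and> einv \<Gamma> (inv_into (edges \<Gamma>) fe e) = inv_into (edges \<Gamma>) fe (einv \<Gamma> e)"
    if "e \<in> edges \<Gamma>" for e
  proof -
    define e' where "e' = inv_into (edges \<Gamma>) fe e"
    have e': "e' \<in> edges \<Gamma>" "fe e' = e"
      using that be by (auto simp: e'_def bij_betw_def inv_into_into f_inv_into_f)
    then have "init \<Gamma> e = fv (init \<Gamma> e')" "einv \<Gamma> e = fe (einv \<Gamma> e')"
      using compat by metis+
    then show ?thesis
      using bv be closed e' by (simp add: e'_def bij_betw_def inv_into_f_f)
  qed
  then show ?thesis
    using bij_betw_inv_into[OF bv] bij_betw_inv_into[OF be] by (simp add: graph_aut_def)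
qed

lemma vertex_transitive_if_singleton:
  "(\<And>u v. u \<in> verts \<Gamma> \<Longrightarrow> v \<in> verts \<Gamma> \<Longrightarrow> u = v) \<Longrightarrow> vertex_transitive \<Gamma>"
  unfolding vertex_transitive_def using graph_aut_id by fastforce

lemma schreier_simps:
  "verts (schreier I J H) = rcosets\<^bsub>FP I J\<^esub> H"
  "edges (schreier I J H) = {(C, a). C \<in> rcosets\<^bsub>FP I J\<^esub> H \<and> a \<in> gens I J}"
  "init (schreier I J H) = fst"
  "einv (schreier I J H) (C, a) = (C #>\<^bsub>FP I J\<^esub> [a], ginv a)"
  by (simp_all add: schreier_def)

definition conjugate :: "'i set \<Rightarrow> 'j set \<Rightarrow> ('i,'j) gen list \<Rightarrow> ('i,'j) gen list set \<Rightarrow> ('i,'j) gen list set" where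
  "conjugate I J g H = (\<lambda>h. inv\<^bsub>FP I J\<^esub> g \<otimes>\<^bsub>FP I J\<^esub> h \<otimes>\<^bsub>FP I J\<^esub> g) ` H"

locale FP_subgroup =
  fixes I :: "'i set" and J :: "'j set" and H :: "('i,'j) gen list set"
  assumes subgroup: "subgroup H (FP I J)"
begin

lemma subset_carrier: "H \<subseteq> carrier (FP I J)"
  by (rule subgroup.subset[OF subgroup])

lemma Nil_in: "[] \<in> H"
  using subgroup.one_closed[OF subgroup] by (simp add: FP_one)

lemma winv_in: "h \<in> H \<Longrightarrow> winv h \<in> H"
  using subgroup.m_inv_closed[OF subgroup, of h] subset_carrier FP_inv[of h] by auto

lemma rcos_in_rcosets: "x \<in> carrier (FP I J) \<Longrightarrow> H #>\<^bsub>FP I J\<^esub> x \<in> rcosets\<^bsub>FP I J\<^esub> H"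
  by (rule FP.rcosetsI[OF subset_carrier])

lemma rcosetsE:
  assumes "C \<in> rcosets\<^bsub>FP I J\<^esub> H"
  obtains x where "x \<in> carrier (FP I J)" "C = H #>\<^bsub>FP I J\<^esub> x"
  using assms by (auto simp: RCOSETS_def)

lemma rcosets_subset_carrier: "C \<in> rcosets\<^bsub>FP I J\<^esub> H \<Longrightarrow> C \<subseteq> carrier (FP I J)"
  by (rule subgroup.rcosets_carrier[OF subgroup FP.is_group])

lemma rcos_eq_iff:
  assumes "x \<in> carrier (FP I J)" "y \<in> carrier (FP I J)"
  shows "H #>\<^bsub>FP I J\<^esub> x = H #>\<^bsub>FP I J\<^esub> y \<longleftrightarrow> (\<exists>h\<in>H. y = h \<otimes>\<^bsub>FP I J\<^esub> x)"
proof
  assume "H #>\<^bsub>FP I J\<^esub> x = H #>\<^bsub>FP I J\<^esub> y"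
  then show "\<exists>h\<in>H. y = h \<otimes>\<^bsub>FP I J\<^esub> x"
    using FP.rcos_self[OF assms(2) subgroup] by (auto simp: r_coset_def)
next
  assume "\<exists>h\<in>H. y = h \<otimes>\<^bsub>FP I J\<^esub> x"
  then show "H #>\<^bsub>FP I J\<^esub> x = H #>\<^bsub>FP I J\<^esub> y"
    using FP.repr_independence[OF _ assms(1) subgroup] by (auto simp: r_coset_def)
qed

lemma rcos_mult_left:
  assumes "h \<in> H" "x \<in> carrier (FP I J)"
  shows "H #>\<^bsub>FP I J\<^esub> (h \<otimes>\<^bsub>FP I J\<^esub> x) = H #>\<^bsub>FP I J\<^esub> x"
  using assms subset_carrier rcos_eq_iff[of x "h \<otimes>\<^bsub>FP I J\<^esub> x"] by auto

lemma rcos_const: "h \<in> H \<Longrightarrow> H #>\<^bsub>FP I J\<^esub> h = H"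
  by (rule subgroup.rcos_const[OF subgroup FP.is_group])

lemma subgroup_in_rcosets: "H \<in> rcosets\<^bsub>FP I J\<^esub> H"
  by (rule subgroup.subgroup_in_rcosets[OF subgroup FP.is_group])

lemma rcos_reduce_Cons:
  assumes "C \<in> rcosets\<^bsub>FP I J\<^esub> H" "a \<in> gens I J" "set w \<subseteq> gens I J"
  shows "(C #>\<^bsub>FP I J\<^esub> [a]) #>\<^bsub>FP I J\<^esub> reduce w = C #>\<^bsub>FP I J\<^esub> reduce (a # w)"
  using assms FP.coset_mult_assoc[OF rcosets_subset_carrier singleton_in_carrier reduce_in_carrier]
    reduce_append_reduce_right[of "[a]" w] by (simp add: FP_mult)

lemma rcos_singleton_in_rcosets:
  assumes "C \<in> rcosets\<^bsub>FP I J\<^esub> H" "a \<in> gens I J"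
  shows "C #>\<^bsub>FP I J\<^esub> [a] \<in> rcosets\<^bsub>FP I J\<^esub> H"
proof -
  obtain x where x: "x \<in> carrier (FP I J)" "C = H #>\<^bsub>FP I J\<^esub> x"
    using assms(1) by (rule rcosetsE)
  then have "C #>\<^bsub>FP I J\<^esub> [a] = H #>\<^bsub>FP I J\<^esub> (x \<otimes>\<^bsub>FP I J\<^esub> [a])"
    using FP.coset_mult_assoc subset_carrier singleton_in_carrier[OF assms(2)] by simp
  then show ?thesis
    using rcos_in_rcosets x(1) singleton_in_carrier[OF assms(2)] by simp
qed

lemma rcos_singleton_ginv:
  assumes "C \<in> rcosets\<^bsub>FP I J\<^esub> H" "a \<in> gens I J"
  shows "(C #>\<^bsub>FP I J\<^esub> [a]) #>\<^bsub>FP I J\<^esub> [ginv a] = C"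
  using rcos_reduce_Cons[OF assms, of "[ginv a]"] assms reduce_cancel_pair[of "[]" a "[]"]
    FP.coset_mult_one[OF rcosets_subset_carrier] by (simp add: FP_one)

lemma schreier_edges_closed:
  "e \<in> edges (schreier I J H) \<Longrightarrow>
     init (schreier I J H) e \<in> verts (schreier I J H) \<and> einv (schreier I J H) e \<in> edges (schreier I J H)"
  using rcos_singleton_in_rcosets by (auto simp: schreier_simps)

lemma vertex_transitive_if_base:
  assumes "\<And>g. g \<in> carrier (FP I J) \<Longrightarrow>
             \<exists>fv fe. graph_aut (schreier I J H) fv fe \<and> fv H = H #>\<^bsub>FP I J\<^esub> g"
  shows "vertex_transitive (schreier I J H)"
  unfolding vertex_transitive_def
proof (intro ballI)
  fix u v assume "u \<in> verts (schreier I J H)" "v \<in> verts (schreier I J H)"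
  then obtain x y where "x \<in> carrier (FP I J)" "u = H #>\<^bsub>FP I J\<^esub> x"
    and "y \<in> carrier (FP I J)" "v = H #>\<^bsub>FP I J\<^esub> y"
    by (auto simp: schreier_simps elim!: rcosetsE)
  then obtain fv fe fv' fe' where aut: "graph_aut (schreier I J H) fv fe" "fv H = u"
    and aut': "graph_aut (schreier I J H) fv' fe'" "fv' H = v"
    using assms by metis
  let ?fv = "inv_into (verts (schreier I J H)) fv"
  have "graph_aut (schreier I J H) ?fv (inv_into (edges (schreier I J H)) fe)"
    using graph_aut_inv[OF aut(1) schreier_edges_closed] .
  moreover have "?fv u = H"
    using aut subgroup_in_rcosets by (auto simp: graph_aut_def bij_betw_def schreier_simps inv_into_f_f)
  ultimately show "\<exists>fv fe. graph_aut (schreier I J H) fv fe \<and> fv u = v"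
    using graph_aut_comp[OF _ aut'(1)] aut'(2) by fastforce
qed

lemma conjugate_subgroup:
  assumes g: "g \<in> carrier (FP I J)"
  shows "subgroup (conjugate I J g H) (FP I J)"
proof (rule FP.subgroupI)
  show "conjugate I J g H \<subseteq> carrier (FP I J)" "conjugate I J g H \<noteq> {}"
    using g subset_carrier Nil_in by (auto simp: conjugate_def)
next
  fix x assume "x \<in> conjugate I J g H"
  then obtain h where "h \<in> H" "x = inv\<^bsub>FP I J\<^esub> g \<otimes>\<^bsub>FP I J\<^esub> h \<otimes>\<^bsub>FP I J\<^esub> g"
    by (auto simp: conjugate_def)
  moreover have "inv\<^bsub>FP I J\<^esub> (inv\<^bsub>FP I J\<^esub> g \<otimes>\<^bsub>FP I J\<^esub> h \<otimes>\<^bsub>FP I J\<^esub> g)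
       = inv\<^bsub>FP I J\<^esub> g \<otimes>\<^bsub>FP I J\<^esub> inv\<^bsub>FP I J\<^esub> h \<otimes>\<^bsub>FP I J\<^esub> g"
    if "h \<in> H" for h
    using that g subset_carrier by (auto simp: FP.inv_mult_group FP.m_assoc)
  ultimately show "inv\<^bsub>FP I J\<^esub> x \<in> conjugate I J g H"
    using subgroup.m_inv_closed[OF subgroup] by (auto simp: conjugate_def)
next
  fix x y assume "x \<in> conjugate I J g H" "y \<in> conjugate I J g H"
  then obtain h h' where "h \<in> H" "x = inv\<^bsub>FP I J\<^esub> g \<otimes>\<^bsub>FP I J\<^esub> h \<otimes>\<^bsub>FP I J\<^esub> g"
    and "h' \<in> H" "y = inv\<^bsub>FP I J\<^esub> g \<otimes>\<^bsub>FP I J\<^esub> h' \<otimes>\<^bsub>FP I J\<^esub> g"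
    by (auto simp: conjugate_def)
  moreover have "x \<otimes>\<^bsub>FP I J\<^esub> y = inv\<^bsub>FP I J\<^esub> g \<otimes>\<^bsub>FP I J\<^esub> (h \<otimes>\<^bsub>FP I J\<^esub> h') \<otimes>\<^bsub>FP I J\<^esub> g"
    using calculation g subset_carrier by (auto simp: FP.m_assoc FP.mult_inv_cancel_left subsetD)
  ultimately show "x \<otimes>\<^bsub>FP I J\<^esub> y \<in> conjugate I J g H"
    using subgroup.m_closed[OF subgroup] by (auto simp: conjugate_def)
qed

lemma conjugate_Nil: "conjugate I J [] H = H"
proof -
  have "inv\<^bsub>FP I J\<^esub> \<one>\<^bsub>FP I J\<^esub> \<otimes>\<^bsub>FP I J\<^esub> h \<otimes>\<^bsub>FP I J\<^esub> \<one>\<^bsub>FP I J\<^esub> = h" if "h \<in> H" for h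
    using that subset_carrier by auto
  then show ?thesis
    by (simp add: conjugate_def FP_one)
qed

lemma conjugate_conjugate:
  assumes "g \<in> carrier (FP I J)" "g' \<in> carrier (FP I J)"
  shows "conjugate I J g' (conjugate I J g H) = conjugate I J (g \<otimes>\<^bsub>FP I J\<^esub> g') H"
  using assms subset_carrier
  by (auto simp: conjugate_def image_image FP.inv_mult_group FP.m_assoc intro!: image_cong)

lemma length_transitive_iff:
  "length_transitive I J H \<longleftrightarrow> (\<forall>g \<in> carrier (FP I J). \<exists>\<alpha>.
     \<alpha> \<in> iso ((FP I J)\<lparr>carrier := H\<rparr>) ((FP I J)\<lparr>carrier := conjugate I J g H\<rparr>)
     \<and> (\<forall>h\<in>H. length (\<alpha> h) = length h))"
proof -
  have "word_length I J (\<alpha> h) = word_length I J h \<longleftrightarrow> length (\<alpha> h) = length h"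
    if "\<alpha> \<in> iso ((FP I J)\<lparr>carrier := H\<rparr>) ((FP I J)\<lparr>carrier := conjugate I J g H\<rparr>)"
      "g \<in> carrier (FP I J)" "h \<in> H" for \<alpha> g h
  proof -
    have "\<alpha> h \<in> conjugate I J g H"
      using that by (auto simp: iso_def bij_betw_def)
    then have "\<alpha> h \<in> carrier (FP I J)"
      using subgroup.subset[OF conjugate_subgroup[OF that(2)]] by blast
    then show ?thesis
      using that(3) subset_carrier by (auto simp: word_length_eq_length)
  qed
  then show ?thesis
    unfolding length_transitive_def conjugate_def[symmetric] by meson
qed

end

section \<open>Vertex-transitivity implies length-transitivity\<close>

locale schreier_automorphism = FP_subgroup +
  fixes fv :: "('i,'j) gen list set \<Rightarrow> ('i,'j) gen list set"
    and fe :: "('i,'j) gen list set \<times> ('i,'j) gen \<Rightarrow> ('i,'j) gen list set \<times> ('i,'j) gen"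
  assumes aut: "graph_aut (schreier I J H) fv fe"
begin

definition label :: "('i,'j) gen list set \<Rightarrow> ('i,'j) gen \<Rightarrow> ('i,'j) gen" where
  "label C a = snd (fe (C, a))"

fun relabel :: "('i,'j) gen list set \<Rightarrow> ('i,'j) gen list \<Rightarrow> ('i,'j) gen list" where
  "relabel C [] = []"
| "relabel C (a # w) = label C a # relabel (C #>\<^bsub>FP I J\<^esub> [a]) w"

lemma bij_fv: "bij_betw fv (rcosets\<^bsub>FP I J\<^esub> H) (rcosets\<^bsub>FP I J\<^esub> H)"
  using aut by (simp add: graph_aut_def schreier_simps)

lemma fe_edge:
  assumes "C \<in> rcosets\<^bsub>FP I J\<^esub> H" "a \<in> gens I J"
  shows "fe (C, a) = (fv C, label C a)" "label C a \<in> gens I J"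
proof -
  have "(C, a) \<in> edges (schreier I J H)"
    using assms by (simp add: schreier_simps)
  then have "fe (C, a) \<in> edges (schreier I J H)" "fst (fe (C, a)) = fv C"
    using aut by (auto simp: graph_aut_def bij_betw_def schreier_simps)
  then show "fe (C, a) = (fv C, label C a)" "label C a \<in> gens I J"
    by (auto simp: label_def schreier_simps prod_eq_iff)
qed

lemma fv_rcos_singleton:
  assumes C: "C \<in> rcosets\<^bsub>FP I J\<^esub> H" and a: "a \<in> gens I J"
  shows "fv (C #>\<^bsub>FP I J\<^esub> [a]) = fv C #>\<^bsub>FP I J\<^esub> [label C a]"
    and "label (C #>\<^bsub>FP I J\<^esub> [a]) (ginv a) = ginv (label C a)"
proof -
  have "(C, a) \<in> edges (schreier I J H)"
    using C a by (simp add: schreier_simps)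
  then have "einv (schreier I J H) (fe (C, a)) = fe (einv (schreier I J H) (C, a))"
    using aut by (simp add: graph_aut_def)
  then show "fv (C #>\<^bsub>FP I J\<^esub> [a]) = fv C #>\<^bsub>FP I J\<^esub> [label C a]"
    and "label (C #>\<^bsub>FP I J\<^esub> [a]) (ginv a) = ginv (label C a)"
    using fe_edge[OF C a] fe_edge[OF rcos_singleton_in_rcosets[OF C a], of "ginv a"] a
    by (simp_all add: schreier_simps)
qed

lemma bij_label:
  assumes C: "C \<in> rcosets\<^bsub>FP I J\<^esub> H"
  shows "bij_betw (label C) (gens I J) (gens I J)"
proof -
  have bij_fe: "bij_betw fe (edges (schreier I J H)) (edges (schreier I J H))"
    using aut by (simp add: graph_aut_def)
  have "inj_on (label C) (gens I J)"
  proof (rule inj_onI)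
    fix a a' assume "a \<in> gens I J" "a' \<in> gens I J" "label C a = label C a'"
    then show "a = a'"
      using C fe_edge bij_fe by (auto simp: bij_betw_def inj_on_def schreier_simps)
  qed
  moreover have "b \<in> label C ` gens I J" if b: "b \<in> gens I J" for b
  proof -
    have "(fv C, b) \<in> edges (schreier I J H)"
      using C b bij_fv by (auto simp: schreier_simps bij_betw_def)
    then obtain C' a where "C' \<in> rcosets\<^bsub>FP I J\<^esub> H" "a \<in> gens I J" "fe (C', a) = (fv C, b)"
      using bij_fe by (force simp: bij_betw_def schreier_simps)
    then show ?thesis
      using C fe_edge bij_fv by (auto simp: bij_betw_def inj_on_def)
  qed
  ultimately show ?thesis
    using fe_edge(2)[OF C] by (auto simp: bij_betw_def)
qed

lemma length_relabel [simp]: "length (relabel C w) = length w"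
  by (induction w arbitrary: C) auto

lemma relabel_gens:
  "C \<in> rcosets\<^bsub>FP I J\<^esub> H \<Longrightarrow> set w \<subseteq> gens I J \<Longrightarrow> set (relabel C w) \<subseteq> gens I J"
  by (induction w arbitrary: C) (auto simp: fe_edge rcos_singleton_in_rcosets)

lemma fv_rcos_reduce:
  "C \<in> rcosets\<^bsub>FP I J\<^esub> H \<Longrightarrow> set w \<subseteq> gens I J \<Longrightarrow>
     fv (C #>\<^bsub>FP I J\<^esub> reduce w) = fv C #>\<^bsub>FP I J\<^esub> reduce (relabel C w)"
proof (induction w arbitrary: C)
  case Nil
  then show ?case
    using FP.coset_mult_one[OF rcosets_subset_carrier] bij_fv by (auto simp: FP_one bij_betw_def)
next
  case (Cons a w)
  let ?C' = "C #>\<^bsub>FP I J\<^esub> [a]"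
  have a: "a \<in> gens I J" and w: "set w \<subseteq> gens I J" and C': "?C' \<in> rcosets\<^bsub>FP I J\<^esub> H"
    using Cons.prems rcos_singleton_in_rcosets by auto
  have "fv (C #>\<^bsub>FP I J\<^esub> reduce (a # w)) = fv (?C' #>\<^bsub>FP I J\<^esub> reduce w)"
    using rcos_reduce_Cons[OF Cons.prems(1) a w] by simp
  also have "\<dots> = (fv C #>\<^bsub>FP I J\<^esub> [label C a]) #>\<^bsub>FP I J\<^esub> reduce (relabel ?C' w)"
    using Cons.IH[OF C' w] fv_rcos_singleton(1)[OF Cons.prems(1) a] by simp
  also have "\<dots> = fv C #>\<^bsub>FP I J\<^esub> reduce (relabel C (a # w))"
    using rcos_reduce_Cons fe_edge(2)[OF Cons.prems(1) a] relabel_gens[OF C' w]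
      bij_betwE[OF bij_fv] Cons.prems(1) by simp
  finally show ?case .
qed

lemma relabel_append:
  "C \<in> rcosets\<^bsub>FP I J\<^esub> H \<Longrightarrow> set u \<subseteq> gens I J \<Longrightarrow>
     relabel C (u @ v) = relabel C u @ relabel (C #>\<^bsub>FP I J\<^esub> reduce u) v"
proof (induction u arbitrary: C)
  case Nil
  then show ?case
    using FP.coset_mult_one[OF rcosets_subset_carrier] by (simp add: FP_one)
qed (simp add: rcos_singleton_in_rcosets rcos_reduce_Cons)

lemma relabel_cancel_cons:
  assumes C: "C \<in> rcosets\<^bsub>FP I J\<^esub> H" and a: "a \<in> gens I J" and r: "set r \<subseteq> gens I J"
  shows "relabel C (cancel_cons a r) = cancel_cons (label C a) (relabel (C #>\<^bsub>FP I J\<^esub> [a]) r)"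
proof (cases r)
  case (Cons c r')
  let ?C' = "C #>\<^bsub>FP I J\<^esub> [a]"
  have C': "?C' \<in> rcosets\<^bsub>FP I J\<^esub> H" and c: "c \<in> gens I J"
    using rcos_singleton_in_rcosets[OF C a] r Cons by auto
  have iff: "label ?C' c = ginv (label C a) \<longleftrightarrow> c = ginv a"
  proof -
    have "inj_on (label ?C') (gens I J)"
      using bij_label[OF C'] by (simp add: bij_betw_def)
    then have "label ?C' c = label ?C' (ginv a) \<longleftrightarrow> c = ginv a"
      using a c by (meson inj_on_eq_iff ginv_gens)
    then show ?thesis
      using fv_rcos_singleton(2)[OF C a] by simp
  qed
  show ?thesis
  proof (cases "c = ginv a")
    case True
    then show ?thesis
      using Cons iff rcos_singleton_ginv[OF C a] by (simp add: cancel_cons_def)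
  next
    case False
    then show ?thesis
      using Cons iff by (simp add: cancel_cons_def)
  qed
qed (simp add: cancel_cons_def)

lemma relabel_reduce:
  "C \<in> rcosets\<^bsub>FP I J\<^esub> H \<Longrightarrow> set w \<subseteq> gens I J \<Longrightarrow> relabel C (reduce w) = reduce (relabel C w)"
proof (induction w arbitrary: C)
  case (Cons a w)
  then show ?case
    using relabel_cancel_cons[of C a "reduce w"] set_reduce[of w] rcos_singleton_in_rcosets
    by (auto simp: reduce_Cons)
qed simp

lemma relabel_inj:
  "C \<in> rcosets\<^bsub>FP I J\<^esub> H \<Longrightarrow> set w \<subseteq> gens I J \<Longrightarrow> set w' \<subseteq> gens I J \<Longrightarrow>
     relabel C w = relabel C w' \<Longrightarrow> w = w'"
proof (induction w arbitrary: C w')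
  case (Cons a w)
  then obtain a' w'' where "w' = a' # w''"
    by (cases w') auto
  with Cons have "a = a'" "relabel (C #>\<^bsub>FP I J\<^esub> [a]) w = relabel (C #>\<^bsub>FP I J\<^esub> [a]) w''"
    using bij_label[of C] inj_on_eq_iff[of "label C" "gens I J" a a'] by (auto simp: bij_betw_def)
  with Cons \<open>w' = a' # w''\<close> show ?case
    using Cons.IH[of "C #>\<^bsub>FP I J\<^esub> [a]" w''] rcos_singleton_in_rcosets by auto
qed (metis length_relabel length_0_conv)

lemma relabel_surj:
  "C \<in> rcosets\<^bsub>FP I J\<^esub> H \<Longrightarrow> set k \<subseteq> gens I J \<Longrightarrow> \<exists>w. set w \<subseteq> gens I J \<and> relabel C w = k"
proof (induction k arbitrary: C)
  case (Cons b k)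
  then have "b \<in> label C ` gens I J"
    using bij_label[of C] by (simp add: bij_betw_def)
  then obtain a where "a \<in> gens I J" "label C a = b"
    by blast
  moreover obtain w where "set w \<subseteq> gens I J" "relabel (C #>\<^bsub>FP I J\<^esub> [a]) w = k"
    using Cons rcos_singleton_in_rcosets[OF _ \<open>a \<in> gens I J\<close>] by auto
  ultimately show ?case
    by (intro exI[of _ "a # w"]) simp
qed (metis empty_subsetI list.set(1) relabel.simps(1))

lemma relabel_in_carrier:
  assumes "h \<in> H"
  shows "relabel H h \<in> carrier (FP I J)"
proof -
  have h: "set h \<subseteq> gens I J" "reduce h = h"
    using assms subset_carrier by (auto simp: FP_carrier reduce_reduced)
  then have "reduce (relabel H h) = relabel H h"
    using relabel_reduce[OF subgroup_in_rcosets h(1)] by simp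
  then show ?thesis
    using relabel_gens[OF subgroup_in_rcosets h(1)] reduced_reduce[of "relabel H h"]
    by (simp add: FP_carrier)
qed

lemma relabel_mult:
  assumes x: "x \<in> H" and y: "y \<in> H"
  shows "relabel H (x \<otimes>\<^bsub>FP I J\<^esub> y) = relabel H x \<otimes>\<^bsub>FP I J\<^esub> relabel H y"
proof -
  have gens: "set x \<subseteq> gens I J" "set y \<subseteq> gens I J" and "reduce x = x"
    using x y subset_carrier by (auto simp: FP_carrier reduce_reduced)
  then have "H #>\<^bsub>FP I J\<^esub> reduce x = H"
    using rcos_const[OF x] by simp
  then have "relabel H (x @ y) = relabel H x @ relabel H y"
    using relabel_append[OF subgroup_in_rcosets gens(1)] by simp
  then show ?thesis
    using relabel_reduce[OF subgroup_in_rcosets, of "x @ y"] gens by (simp add: FP_mult)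
qed

lemma relabel_in_conjugate:
  assumes g: "g \<in> carrier (FP I J)" and fvH: "fv H = H #>\<^bsub>FP I J\<^esub> g" and h: "h \<in> H"
  shows "relabel H h \<in> conjugate I J g H"
proof -
  let ?r = "relabel H h"
  have r: "?r \<in> carrier (FP I J)"
    by (rule relabel_in_carrier[OF h])
  have h': "set h \<subseteq> gens I J" "reduce h = h"
    using h subset_carrier by (auto simp: FP_carrier reduce_reduced)
  have "H #>\<^bsub>FP I J\<^esub> g = fv (H #>\<^bsub>FP I J\<^esub> reduce h)"
    using fvH rcos_const[OF h] h' by simp
  also have "\<dots> = (H #>\<^bsub>FP I J\<^esub> g) #>\<^bsub>FP I J\<^esub> ?r"
    using fv_rcos_reduce[OF subgroup_in_rcosets h'(1)] fvH r by (simp add: FP_carrier reduce_reduced)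
  also have "\<dots> = H #>\<^bsub>FP I J\<^esub> (g \<otimes>\<^bsub>FP I J\<^esub> ?r)"
    using FP.coset_mult_assoc[OF subset_carrier g r] .
  finally obtain h1 where h1: "h1 \<in> H" "g \<otimes>\<^bsub>FP I J\<^esub> ?r = h1 \<otimes>\<^bsub>FP I J\<^esub> g"
    using rcos_eq_iff g r by auto
  have "?r = inv\<^bsub>FP I J\<^esub> g \<otimes>\<^bsub>FP I J\<^esub> (g \<otimes>\<^bsub>FP I J\<^esub> ?r)"
    using g r by (simp add: FP.inv_mult_cancel_left)
  also have "\<dots> = inv\<^bsub>FP I J\<^esub> g \<otimes>\<^bsub>FP I J\<^esub> h1 \<otimes>\<^bsub>FP I J\<^esub> g"
    using h1 g subset_carrier by (auto simp: FP.m_assoc)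
  finally show ?thesis
    using h1(1) by (auto simp: conjugate_def)
qed

lemma conjugate_subset_relabel:
  assumes g: "g \<in> carrier (FP I J)" and fvH: "fv H = H #>\<^bsub>FP I J\<^esub> g"
  shows "conjugate I J g H \<subseteq> relabel H ` H"
proof
  fix k assume "k \<in> conjugate I J g H"
  then obtain h where h: "h \<in> H" "k = inv\<^bsub>FP I J\<^esub> g \<otimes>\<^bsub>FP I J\<^esub> h \<otimes>\<^bsub>FP I J\<^esub> g"
    by (auto simp: conjugate_def)
  then have k: "k \<in> carrier (FP I J)" "g \<otimes>\<^bsub>FP I J\<^esub> k = h \<otimes>\<^bsub>FP I J\<^esub> g"
    using g subset_carrier by (auto simp: FP.m_assoc FP.mult_inv_cancel_left)
  then have k': "set k \<subseteq> gens I J" "reduce k = k"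
    by (auto simp: FP_carrier reduce_reduced)
  obtain w0 where "set w0 \<subseteq> gens I J" "relabel H w0 = k"
    using relabel_surj[OF subgroup_in_rcosets k'(1)] by blast
  then obtain w where w: "w \<in> carrier (FP I J)" "relabel H w = k"
    using relabel_reduce[OF subgroup_in_rcosets] reduce_in_carrier k'(2) by metis
  then have w': "set w \<subseteq> gens I J" "reduce w = w"
    by (auto simp: FP_carrier reduce_reduced)
  have "fv (H #>\<^bsub>FP I J\<^esub> w) = (H #>\<^bsub>FP I J\<^esub> g) #>\<^bsub>FP I J\<^esub> k"
    using fv_rcos_reduce[OF subgroup_in_rcosets w'(1)] w w' k' fvH by simp
  also have "\<dots> = H #>\<^bsub>FP I J\<^esub> g"
    using FP.coset_mult_assoc[OF subset_carrier g k(1)] k(2) rcos_mult_left[OF h(1) g] by simp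
  finally have "fv (H #>\<^bsub>FP I J\<^esub> w) = fv H"
    using fvH by simp
  then have "H #>\<^bsub>FP I J\<^esub> w = H"
    using bij_fv rcos_in_rcosets[OF w(1)] subgroup_in_rcosets by (auto simp: bij_betw_def inj_on_def)
  then have "w \<in> H"
    using FP.coset_join1[OF _ w(1) subgroup] by blast
  then show "k \<in> relabel H ` H"
    using w(2) by blast
qed

end

theorem length_transitive_if_vertex_transitive:
  assumes H: "subgroup H (FP I J)" and vt: "vertex_transitive (schreier I J H)"
  shows "length_transitive I J H"
  unfolding FP_subgroup.length_transitive_iff[OF FP_subgroup.intro[OF H]]
proof
  fix g assume g: "g \<in> carrier (FP I J)"
  interpret FP_subgroup I J H
    by (fact FP_subgroup.intro[OF H])
  obtain fv fe where aut: "graph_aut (schreier I J H) fv fe" and fvH: "fv H = H #>\<^bsub>FP I J\<^esub> g"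
    using vt subgroup_in_rcosets rcos_in_rcosets[OF g]
    unfolding vertex_transitive_def schreier_simps by blast
  interpret schreier_automorphism I J H fv fe
    by (fact schreier_automorphism.intro[OF FP_subgroup.intro[OF H] schreier_automorphism_axioms.intro[OF aut]])
  have "relabel H \<in> iso ((FP I J)\<lparr>carrier := H\<rparr>) ((FP I J)\<lparr>carrier := conjugate I J g H\<rparr>)"
  proof -
    have "inj_on (relabel H) H"
      using relabel_inj[OF subgroup_in_rcosets] subset_carrier by (auto simp: inj_on_def FP_carrier)
    then have "bij_betw (relabel H) H (conjugate I J g H)"
      using relabel_in_conjugate[OF g fvH] conjugate_subset_relabel[OF g fvH]
      by (auto simp: bij_betw_def)
    then show ?thesis
      using relabel_mult by (auto simp: iso_def hom_def bij_betw_def)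
  qed
  then show "\<exists>\<alpha>. \<alpha> \<in> iso ((FP I J)\<lparr>carrier := H\<rparr>) ((FP I J)\<lparr>carrier := conjugate I J g H\<rparr>)
      \<and> (\<forall>h\<in>H. length (\<alpha> h) = length h)"
    by auto
qed

section \<open>Length-transitivity implies vertex-transitivity\<close>

text \<open>A bijection \<open>\<phi>\<close> of the carrier preserving lengths and common prefixes is a root-fixing
  automorphism of the Cayley tree of the free product. If moreover \<open>\<phi> (h p) = \<alpha> h \<phi> p\<close> for an
  isomorphism \<open>\<alpha>\<close> of \<open>H\<close> onto \<open>g\<inverse> H g\<close>, then \<open>H p \<mapsto> H g \<phi> p\<close> is an automorphism of the
  Schreier graph.\<close>

locale equivariant_isometry = FP_subgroup +
  fixes g :: "('i,'j) gen list" and \<alpha> \<phi> :: "('i,'j) gen list \<Rightarrow> ('i,'j) gen list"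
  assumes g: "g \<in> carrier (FP I J)"
    and image_\<phi>: "\<phi> ` carrier (FP I J) = carrier (FP I J)"
    and length_\<phi>: "p \<in> carrier (FP I J) \<Longrightarrow> length (\<phi> p) = length p"
    and lcp_\<phi>: "p \<in> carrier (FP I J) \<Longrightarrow> q \<in> carrier (FP I J) \<Longrightarrow> lcp (\<phi> p) (\<phi> q) = lcp p q"
    and \<phi>_mult: "h \<in> H \<Longrightarrow> p \<in> carrier (FP I J) \<Longrightarrow> \<phi> (h \<otimes>\<^bsub>FP I J\<^esub> p) = \<alpha> h \<otimes>\<^bsub>FP I J\<^esub> \<phi> p"
    and image_\<alpha>: "\<alpha> ` H = conjugate I J g H"
begin

lemma \<phi>_carrier: "p \<in> carrier (FP I J) \<Longrightarrow> \<phi> p \<in> carrier (FP I J)"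
  using image_\<phi> by blast

lemma inj_\<phi>: "inj_on \<phi> (carrier (FP I J))"
proof (rule inj_onI)
  fix p q assume p: "p \<in> carrier (FP I J)" and q: "q \<in> carrier (FP I J)" and eq: "\<phi> p = \<phi> q"
  then have "lcp p q = length p" "length p = length q"
    using lcp_\<phi>[OF p q] lcp_refl[of "\<phi> q"] length_\<phi> by metis+
  then show "p = q"
    using take_lcp[of p q] by simp
qed

lemma length_inv_mult_\<phi>:
  "p \<in> carrier (FP I J) \<Longrightarrow> q \<in> carrier (FP I J) \<Longrightarrow>
     length (inv\<^bsub>FP I J\<^esub> \<phi> p \<otimes>\<^bsub>FP I J\<^esub> \<phi> q) = length (inv\<^bsub>FP I J\<^esub> p \<otimes>\<^bsub>FP I J\<^esub> q)"
  by (simp add: length_inv_mult \<phi>_carrier length_\<phi> lcp_\<phi>)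

lemma mem_image_\<alpha>_iff:
  assumes x: "x \<in> carrier (FP I J)"
  shows "x \<in> \<alpha> ` H \<longleftrightarrow> (\<exists>h\<in>H. g \<otimes>\<^bsub>FP I J\<^esub> x = h \<otimes>\<^bsub>FP I J\<^esub> g)"
proof -
  have "x = inv\<^bsub>FP I J\<^esub> g \<otimes>\<^bsub>FP I J\<^esub> h \<otimes>\<^bsub>FP I J\<^esub> g \<longleftrightarrow> g \<otimes>\<^bsub>FP I J\<^esub> x = h \<otimes>\<^bsub>FP I J\<^esub> g"
    if "h \<in> H" for h
    using that x g subset_carrier FP.inv_solve_left[where I = I and J = J and a = x and b = g and c = "h \<otimes>\<^bsub>FP I J\<^esub> g"]
    by (auto simp: FP.m_assoc)
  then show ?thesis
    by (auto simp: image_\<alpha> conjugate_def)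
qed

lemma \<alpha>_carrier: "h \<in> H \<Longrightarrow> \<alpha> h \<in> carrier (FP I J)"
  using subgroup.subset[OF conjugate_subgroup[OF g]] image_\<alpha> by blast

definition edge_label :: "('i,'j) gen list \<Rightarrow> ('i,'j) gen \<Rightarrow> ('i,'j) gen" where
  "edge_label p a = hd (inv\<^bsub>FP I J\<^esub> \<phi> p \<otimes>\<^bsub>FP I J\<^esub> \<phi> (p \<otimes>\<^bsub>FP I J\<^esub> [a]))"

lemma \<phi>_mult_singleton:
  assumes p: "p \<in> carrier (FP I J)" and a: "a \<in> gens I J"
  shows "edge_label p a \<in> gens I J" "\<phi> (p \<otimes>\<^bsub>FP I J\<^esub> [a]) = \<phi> p \<otimes>\<^bsub>FP I J\<^esub> [edge_label p a]"
proof -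
  let ?x = "inv\<^bsub>FP I J\<^esub> \<phi> p \<otimes>\<^bsub>FP I J\<^esub> \<phi> (p \<otimes>\<^bsub>FP I J\<^esub> [a])"
  have pa: "p \<otimes>\<^bsub>FP I J\<^esub> [a] \<in> carrier (FP I J)"
    using p singleton_in_carrier[OF a] by simp
  have "length ?x = length (inv\<^bsub>FP I J\<^esub> p \<otimes>\<^bsub>FP I J\<^esub> (p \<otimes>\<^bsub>FP I J\<^esub> [a]))"
    by (rule length_inv_mult_\<phi>[OF p pa])
  also have "\<dots> = 1"
    using p singleton_in_carrier[OF a] by (simp add: FP.inv_mult_cancel_left)
  moreover have "?x \<in> carrier (FP I J)"
    using p pa \<phi>_carrier by simp
  ultimately obtain b where b: "b \<in> gens I J" "?x = [b]"
    by (metis length_one_in_carrier)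
  then show "edge_label p a \<in> gens I J"
    by (simp add: edge_label_def)
  show "\<phi> (p \<otimes>\<^bsub>FP I J\<^esub> [a]) = \<phi> p \<otimes>\<^bsub>FP I J\<^esub> [edge_label p a]"
    using b p pa \<phi>_carrier FP.mult_inv_cancel_left[of "\<phi> p" I J "\<phi> (p \<otimes>\<^bsub>FP I J\<^esub> [a])"]
    by (simp add: edge_label_def)
qed

lemma edge_label_mult_left:
  assumes "h \<in> H" "p \<in> carrier (FP I J)" "a \<in> gens I J"
  shows "edge_label (h \<otimes>\<^bsub>FP I J\<^esub> p) a = edge_label p a"
proof -
  have h: "h \<in> carrier (FP I J)" and pa: "p \<otimes>\<^bsub>FP I J\<^esub> [a] \<in> carrier (FP I J)"
    using assms subset_carrier singleton_in_carrier[OF assms(3)] by auto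
  have "h \<otimes>\<^bsub>FP I J\<^esub> p \<otimes>\<^bsub>FP I J\<^esub> [a] = h \<otimes>\<^bsub>FP I J\<^esub> (p \<otimes>\<^bsub>FP I J\<^esub> [a])"
    using h assms(2) singleton_in_carrier[OF assms(3)] by (rule FP.m_assoc)
  then have "\<phi> (h \<otimes>\<^bsub>FP I J\<^esub> p \<otimes>\<^bsub>FP I J\<^esub> [a]) = \<alpha> h \<otimes>\<^bsub>FP I J\<^esub> \<phi> (p \<otimes>\<^bsub>FP I J\<^esub> [a])"
    using \<phi>_mult[OF assms(1) pa] by simp
  then show ?thesis
    using assms h pa \<alpha>_carrier \<phi>_carrier
    by (simp add: edge_label_def \<phi>_mult FP.inv_mult_group FP.m_assoc FP.inv_mult_cancel_left)
qed

lemma edge_label_ginv: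
  assumes p: "p \<in> carrier (FP I J)" and a: "a \<in> gens I J"
  shows "edge_label (p \<otimes>\<^bsub>FP I J\<^esub> [a]) (ginv a) = ginv (edge_label p a)"
proof -
  let ?b = "edge_label p a"
  have pa: "p \<otimes>\<^bsub>FP I J\<^esub> [a] \<in> carrier (FP I J)" and b: "[?b] \<in> carrier (FP I J)"
    using p singleton_in_carrier[OF a] singleton_in_carrier[OF \<phi>_mult_singleton(1)[OF p a]] by auto
  have "p \<otimes>\<^bsub>FP I J\<^esub> [a] \<otimes>\<^bsub>FP I J\<^esub> [ginv a] = p"
    using p a singleton_mult_ginv[where a = a] by (simp add: FP.m_assoc singleton_in_carrier)
  then have "inv\<^bsub>FP I J\<^esub> \<phi> (p \<otimes>\<^bsub>FP I J\<^esub> [a]) \<otimes>\<^bsub>FP I J\<^esub> \<phi> (p \<otimes>\<^bsub>FP I J\<^esub> [a] \<otimes>\<^bsub>FP I J\<^esub> [ginv a])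
      = inv\<^bsub>FP I J\<^esub> [?b] \<otimes>\<^bsub>FP I J\<^esub> (inv\<^bsub>FP I J\<^esub> \<phi> p \<otimes>\<^bsub>FP I J\<^esub> \<phi> p)"
    using \<phi>_mult_singleton(2)[OF p a] p b \<phi>_carrier by (simp add: FP.inv_mult_group FP.m_assoc)
  also have "\<dots> = [ginv ?b]"
    using p b \<phi>_carrier singleton_inv \<phi>_mult_singleton(1)[OF p a] by simp
  finally show ?thesis
    by (simp add: edge_label_def)
qed

lemma rcos_g_\<phi>_mult_left:
  assumes h: "h \<in> H" and p: "p \<in> carrier (FP I J)"
  shows "H #>\<^bsub>FP I J\<^esub> (g \<otimes>\<^bsub>FP I J\<^esub> \<phi> (h \<otimes>\<^bsub>FP I J\<^esub> p)) = H #>\<^bsub>FP I J\<^esub> (g \<otimes>\<^bsub>FP I J\<^esub> \<phi> p)"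
proof -
  obtain h1 where h1: "h1 \<in> H" "g \<otimes>\<^bsub>FP I J\<^esub> \<alpha> h = h1 \<otimes>\<^bsub>FP I J\<^esub> g"
    using mem_image_\<alpha>_iff[OF \<alpha>_carrier[OF h]] h by auto
  have "g \<otimes>\<^bsub>FP I J\<^esub> \<phi> (h \<otimes>\<^bsub>FP I J\<^esub> p) = (g \<otimes>\<^bsub>FP I J\<^esub> \<alpha> h) \<otimes>\<^bsub>FP I J\<^esub> \<phi> p"
    using h p g \<alpha>_carrier \<phi>_carrier by (simp add: \<phi>_mult FP.m_assoc)
  also have "\<dots> = h1 \<otimes>\<^bsub>FP I J\<^esub> (g \<otimes>\<^bsub>FP I J\<^esub> \<phi> p)"
    using h1 g p \<phi>_carrier subset_carrier by (auto simp: FP.m_assoc)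
  finally show ?thesis
    using rcos_mult_left[OF h1(1)] g p \<phi>_carrier by simp
qed

lemma rcos_g_\<phi>_cancel:
  assumes p: "p \<in> carrier (FP I J)" and q: "q \<in> carrier (FP I J)"
    and eq: "H #>\<^bsub>FP I J\<^esub> (g \<otimes>\<^bsub>FP I J\<^esub> \<phi> p) = H #>\<^bsub>FP I J\<^esub> (g \<otimes>\<^bsub>FP I J\<^esub> \<phi> q)"
  shows "H #>\<^bsub>FP I J\<^esub> p = H #>\<^bsub>FP I J\<^esub> q"
proof -
  let ?x = "\<phi> q \<otimes>\<^bsub>FP I J\<^esub> inv\<^bsub>FP I J\<^esub> \<phi> p"
  have x: "?x \<in> carrier (FP I J)"
    using p q \<phi>_carrier by simp
  obtain h1 where h1: "h1 \<in> H" "g \<otimes>\<^bsub>FP I J\<^esub> \<phi> q = h1 \<otimes>\<^bsub>FP I J\<^esub> (g \<otimes>\<^bsub>FP I J\<^esub> \<phi> p)"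
    using eq rcos_eq_iff g p q \<phi>_carrier by auto
  have h1': "h1 \<in> carrier (FP I J)"
    using h1(1) subset_carrier by blast
  have "g \<otimes>\<^bsub>FP I J\<^esub> ?x = (g \<otimes>\<^bsub>FP I J\<^esub> \<phi> q) \<otimes>\<^bsub>FP I J\<^esub> inv\<^bsub>FP I J\<^esub> \<phi> p"
    using g p q \<phi>_carrier by (simp add: FP.m_assoc)
  also have "\<dots> = h1 \<otimes>\<^bsub>FP I J\<^esub> g"
    unfolding h1(2) using h1' g p \<phi>_carrier by (simp add: FP.m_assoc)
  finally have "g \<otimes>\<^bsub>FP I J\<^esub> ?x = h1 \<otimes>\<^bsub>FP I J\<^esub> g" .
  then obtain h where h: "h \<in> H" "?x = \<alpha> h"
    using mem_image_\<alpha>_iff[OF x] h1(1) by auto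
  then have "\<phi> q = \<phi> (h \<otimes>\<^bsub>FP I J\<^esub> p)"
    using p q \<phi>_carrier \<alpha>_carrier \<phi>_mult
      FP.inv_solve_right'[where I = I and J = J and a = "\<alpha> h" and b = "\<phi> q" and c = "\<phi> p"]
    by simp
  then have "q = h \<otimes>\<^bsub>FP I J\<^esub> p"
    using inj_\<phi> p q h(1) subset_carrier by (auto simp: inj_on_def)
  then show ?thesis
    using rcos_mult_left[OF h(1) p] by simp
qed

lemma some_in_rcos:
  assumes "p \<in> carrier (FP I J)"
  obtains h where "h \<in> H" "(SOME q. q \<in> H #>\<^bsub>FP I J\<^esub> p) = h \<otimes>\<^bsub>FP I J\<^esub> p"
proof -
  have "(SOME q. q \<in> H #>\<^bsub>FP I J\<^esub> p) \<in> H #>\<^bsub>FP I J\<^esub> p"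
    using FP.rcos_self[OF assms subgroup] by (rule someI)
  then show ?thesis
    using that by (auto simp: r_coset_def)
qed

definition vmap :: "('i,'j) gen list set \<Rightarrow> ('i,'j) gen list set" where
  "vmap C = H #>\<^bsub>FP I J\<^esub> (g \<otimes>\<^bsub>FP I J\<^esub> \<phi> (SOME p. p \<in> C))"

definition emap :: "('i,'j) gen list set \<times> ('i,'j) gen \<Rightarrow> ('i,'j) gen list set \<times> ('i,'j) gen" where
  "emap e = (vmap (fst e), edge_label (SOME p. p \<in> fst e) (snd e))"

lemma vmap_rcos: "p \<in> carrier (FP I J) \<Longrightarrow> vmap (H #>\<^bsub>FP I J\<^esub> p) = H #>\<^bsub>FP I J\<^esub> (g \<otimes>\<^bsub>FP I J\<^esub> \<phi> p)"
  by (metis some_in_rcos vmap_def rcos_g_\<phi>_mult_left)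

lemma emap_rcos:
  "p \<in> carrier (FP I J) \<Longrightarrow> a \<in> gens I J \<Longrightarrow>
     emap (H #>\<^bsub>FP I J\<^esub> p, a) = (H #>\<^bsub>FP I J\<^esub> (g \<otimes>\<^bsub>FP I J\<^esub> \<phi> p), edge_label p a)"
  by (metis some_in_rcos emap_def vmap_rcos edge_label_mult_left fst_conv snd_conv)

lemma bij_vmap: "bij_betw vmap (rcosets\<^bsub>FP I J\<^esub> H) (rcosets\<^bsub>FP I J\<^esub> H)"
proof -
  have "inj_on vmap (rcosets\<^bsub>FP I J\<^esub> H)"
  proof (rule inj_onI)
    fix C D assume C: "C \<in> rcosets\<^bsub>FP I J\<^esub> H" and D: "D \<in> rcosets\<^bsub>FP I J\<^esub> H"
      and eq: "vmap C = vmap D"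
    obtain p q where "p \<in> carrier (FP I J)" "C = H #>\<^bsub>FP I J\<^esub> p"
      and "q \<in> carrier (FP I J)" "D = H #>\<^bsub>FP I J\<^esub> q"
      using C D by (metis rcosetsE)
    with eq show "C = D"
      using rcos_g_\<phi>_cancel[of p q] by (simp add: vmap_rcos)
  qed
  moreover have "vmap C \<in> rcosets\<^bsub>FP I J\<^esub> H" if "C \<in> rcosets\<^bsub>FP I J\<^esub> H" for C
    using that g \<phi>_carrier by (metis rcosetsE vmap_rcos rcos_in_rcosets FP.m_closed)
  moreover have "D \<in> vmap ` (rcosets\<^bsub>FP I J\<^esub> H)" if D: "D \<in> rcosets\<^bsub>FP I J\<^esub> H" for D
  proof -
    obtain y where y: "y \<in> carrier (FP I J)" "D = H #>\<^bsub>FP I J\<^esub> y"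
      using D by (rule rcosetsE)
    then obtain p where p: "p \<in> carrier (FP I J)" "\<phi> p = inv\<^bsub>FP I J\<^esub> g \<otimes>\<^bsub>FP I J\<^esub> y"
      using image_\<phi> g by (metis FP.inv_closed FP.m_closed imageE)
    then have "vmap (H #>\<^bsub>FP I J\<^esub> p) = D"
      using y g by (simp add: vmap_rcos FP.mult_inv_cancel_left)
    then show ?thesis
      using rcos_in_rcosets[OF p(1)] by blast
  qed
  ultimately show ?thesis
    by (auto simp: bij_betw_def)
qed

lemma edge_label_inj:
  assumes p: "p \<in> carrier (FP I J)" and a: "a \<in> gens I J" "b \<in> gens I J"
    and eq: "edge_label p a = edge_label p b"
  shows "a = b"
proof -
  have "\<phi> (p \<otimes>\<^bsub>FP I J\<^esub> [a]) = \<phi> (p \<otimes>\<^bsub>FP I J\<^esub> [b])"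
    using \<phi>_mult_singleton(2)[OF p] a eq by metis
  then have "p \<otimes>\<^bsub>FP I J\<^esub> [a] = p \<otimes>\<^bsub>FP I J\<^esub> [b]"
    by (rule inj_onD[OF inj_\<phi>]) (use p a singleton_in_carrier in auto)
  then show ?thesis
    using p a singleton_in_carrier by (metis FP.l_cancel list.inject)
qed

lemma edge_label_surj:
  assumes p: "p \<in> carrier (FP I J)" and b: "b \<in> gens I J"
  shows "\<exists>a\<in>gens I J. edge_label p a = b"
proof -
  have "\<phi> p \<otimes>\<^bsub>FP I J\<^esub> [b] \<in> \<phi> ` carrier (FP I J)"
    using image_\<phi> p \<phi>_carrier singleton_in_carrier[OF b] by simp
  then obtain q where q: "q \<in> carrier (FP I J)" "\<phi> q = \<phi> p \<otimes>\<^bsub>FP I J\<^esub> [b]"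
    by auto
  have "length (inv\<^bsub>FP I J\<^esub> p \<otimes>\<^bsub>FP I J\<^esub> q) = length (inv\<^bsub>FP I J\<^esub> \<phi> p \<otimes>\<^bsub>FP I J\<^esub> \<phi> q)"
    using length_inv_mult_\<phi>[OF p q(1)] by simp
  also have "\<dots> = 1"
    using q p \<phi>_carrier singleton_in_carrier[OF b] by (simp add: FP.inv_mult_cancel_left)
  moreover have "inv\<^bsub>FP I J\<^esub> p \<otimes>\<^bsub>FP I J\<^esub> q \<in> carrier (FP I J)"
    using p q(1) by simp
  ultimately obtain a where a: "a \<in> gens I J" "inv\<^bsub>FP I J\<^esub> p \<otimes>\<^bsub>FP I J\<^esub> q = [a]"
    by (metis length_one_in_carrier)
  then have "q = p \<otimes>\<^bsub>FP I J\<^esub> [a]"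
    using p q(1) singleton_in_carrier[OF a(1)]
      FP.inv_solve_left'[where I = I and J = J and a = "[a]" and b = p and c = q] by simp
  then have "edge_label p a = hd [b]"
    using q p \<phi>_carrier singleton_in_carrier[OF b] by (simp add: edge_label_def FP.inv_mult_cancel_left)
  then show ?thesis
    using a(1) by auto
qed

lemma bij_emap: "bij_betw emap (edges (schreier I J H)) (edges (schreier I J H))"
proof -
  have "inj_on emap (edges (schreier I J H))"
  proof (rule inj_onI)
    fix e e' assume "e \<in> edges (schreier I J H)" "e' \<in> edges (schreier I J H)" and eq: "emap e = emap e'"
    then obtain p a q b where pa: "p \<in> carrier (FP I J)" "a \<in> gens I J" "e = (H #>\<^bsub>FP I J\<^esub> p, a)"
      and qb: "q \<in> carrier (FP I J)" "b \<in> gens I J" "e' = (H #>\<^bsub>FP I J\<^esub> q, b)"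
      by (auto simp: schreier_simps elim!: rcosetsE)
    then have C: "H #>\<^bsub>FP I J\<^esub> p = H #>\<^bsub>FP I J\<^esub> q"
      using eq rcos_g_\<phi>_cancel[of p q] by (simp add: emap_rcos)
    then obtain h where "h \<in> H" "q = h \<otimes>\<^bsub>FP I J\<^esub> p"
      using rcos_eq_iff pa qb by auto
    then have "edge_label p a = edge_label p b"
      using eq pa qb edge_label_mult_left by (simp add: emap_rcos)
    then show "e = e'"
      using edge_label_inj pa qb C by simp
  qed
  moreover have "emap e \<in> edges (schreier I J H)" if "e \<in> edges (schreier I J H)" for e
    using that g \<phi>_carrier \<phi>_mult_singleton(1) rcos_in_rcosets
    by (auto simp: schreier_simps emap_rcos elim!: rcosetsE)
  moreover have "e \<in> emap ` edges (schreier I J H)" if e: "e \<in> edges (schreier I J H)" for e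
  proof -
    obtain D b where D: "D \<in> rcosets\<^bsub>FP I J\<^esub> H" "b \<in> gens I J" "e = (D, b)"
      using e by (auto simp: schreier_simps)
    moreover have "D \<in> vmap ` (rcosets\<^bsub>FP I J\<^esub> H)"
      using D(1) bij_vmap by (simp add: bij_betw_def)
    ultimately obtain C where "C \<in> rcosets\<^bsub>FP I J\<^esub> H" "D = vmap C"
      by blast
    then obtain p where p: "p \<in> carrier (FP I J)" "D = H #>\<^bsub>FP I J\<^esub> (g \<otimes>\<^bsub>FP I J\<^esub> \<phi> p)"
      by (auto simp: vmap_rcos elim!: rcosetsE)
    moreover obtain a where "a \<in> gens I J" "edge_label p a = b"
      using edge_label_surj[OF p(1) D(2)] by blast
    ultimately show ?thesis
      using D(3) emap_rcos rcos_in_rcosets by (force simp: schreier_simps)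
  qed
  ultimately show ?thesis
    by (auto simp: bij_betw_def)
qed

lemma einv_emap:
  assumes "e \<in> edges (schreier I J H)"
  shows "einv (schreier I J H) (emap e) = emap (einv (schreier I J H) e)"
proof -
  obtain p a where p: "p \<in> carrier (FP I J)" and a: "a \<in> gens I J" and e: "e = (H #>\<^bsub>FP I J\<^esub> p, a)"
    using assms by (auto simp: schreier_simps elim!: rcosetsE)
  let ?b = "edge_label p a"
  have "(H #>\<^bsub>FP I J\<^esub> (g \<otimes>\<^bsub>FP I J\<^esub> \<phi> p)) #>\<^bsub>FP I J\<^esub> [?b]
      = H #>\<^bsub>FP I J\<^esub> (g \<otimes>\<^bsub>FP I J\<^esub> \<phi> (p \<otimes>\<^bsub>FP I J\<^esub> [a]))"
    using p a g \<phi>_carrier \<phi>_mult_singleton subset_carrier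
      singleton_in_carrier[OF \<phi>_mult_singleton(1)[OF p a]]
    by (simp add: FP.coset_mult_assoc FP.m_assoc)
  moreover have "(H #>\<^bsub>FP I J\<^esub> p) #>\<^bsub>FP I J\<^esub> [a] = H #>\<^bsub>FP I J\<^esub> (p \<otimes>\<^bsub>FP I J\<^esub> [a])"
    using p singleton_in_carrier[OF a] subset_carrier by (simp add: FP.coset_mult_assoc)
  ultimately show ?thesis
    using p a e singleton_in_carrier[OF a] edge_label_ginv
    by (simp add: schreier_simps emap_rcos)
qed

lemma graph_aut_vmap_emap: "graph_aut (schreier I J H) vmap emap"
  using bij_vmap bij_emap einv_emap by (simp add: graph_aut_def schreier_simps emap_def)

lemma vmap_subgroup: "vmap H = H #>\<^bsub>FP I J\<^esub> g"
proof -
  have "\<phi> [] = []"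
    using length_\<phi>[of "[]"] by (simp add: FP_carrier)
  moreover have "H = H #>\<^bsub>FP I J\<^esub> []"
    using rcos_const Nil_in by simp
  ultimately show ?thesis
    using vmap_rcos[of "[]"] g by (simp add: FP_carrier FP.r_one[of g I J, unfolded FP_one])
qed

lemma moves_base_vertex:
  "\<exists>fv fe. graph_aut (schreier I J H) fv fe \<and> fv H = H #>\<^bsub>FP I J\<^esub> g"
  using graph_aut_vmap_emap vmap_subgroup by blast

end

definition prefix_closure :: "'a list set \<Rightarrow> 'a list set" where
  "prefix_closure K = {take k x | x k. x \<in> K}"

lemma take_min_length [simp]: "take (min k (length xs)) xs = take k xs" "take (min (length xs) k) xs = take k xs"
  by (cases "k \<le> length xs"; simp add: min_def)+

lemma prefix_closureI: "x \<in> K \<Longrightarrow> take k x \<in> prefix_closure K"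
  by (auto simp: prefix_closure_def)

lemma prefix_closureE:
  assumes "p \<in> prefix_closure K"
  obtains x k where "x \<in> K" "p = take k x"
  using assms by (auto simp: prefix_closure_def)

lemma take_in_prefix_closure: "p \<in> prefix_closure K \<Longrightarrow> take m p \<in> prefix_closure K"
  by (metis prefix_closureE prefix_closureI take_take)

lemma (in FP_subgroup) prefix_closure_subset_carrier: "prefix_closure H \<subseteq> carrier (FP I J)"
  using subset_carrier by (auto elim!: prefix_closureE intro!: take_in_carrier)

lemma (in FP_subgroup) mult_in_prefix_closure:
  assumes h: "h \<in> H" and p: "p \<in> prefix_closure H"
  shows "h \<otimes>\<^bsub>FP I J\<^esub> p \<in> prefix_closure H"
proof -
  obtain h' j where h': "h' \<in> H" and pj: "p = take j h'"
    using p by (rule prefix_closureE)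
  have "reduced h" "reduced h'"
    using h h' subset_carrier by (auto simp: FP_carrier)
  then have "reduce (h @ take (min j (length h')) h') \<in> prefix_closure H"
    using reduce_append_take[of h h' "min j (length h')"] h h'
      subgroup.m_closed[OF subgroup h h'] by (auto simp: FP_mult intro: prefix_closureI)
  then show ?thesis
    using pj by (simp add: FP_mult)
qed

locale length_preserving_iso = FP_subgroup +
  fixes K :: "('i,'j) gen list set" and \<alpha> :: "('i,'j) gen list \<Rightarrow> ('i,'j) gen list"
  assumes iso: "\<alpha> \<in> iso ((FP I J)\<lparr>carrier := H\<rparr>) ((FP I J)\<lparr>carrier := K\<rparr>)"
    and K_subset: "K \<subseteq> carrier (FP I J)"
    and length_\<alpha>: "h \<in> H \<Longrightarrow> length (\<alpha> h) = length h"
begin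

lemma bij_\<alpha>: "bij_betw \<alpha> H K"
  using iso by (simp add: iso_def)

lemma \<alpha>_carrier: "h \<in> H \<Longrightarrow> \<alpha> h \<in> carrier (FP I J)"
  using bij_\<alpha> K_subset by (auto simp: bij_betw_def)

lemma \<alpha>_mult: "x \<in> H \<Longrightarrow> y \<in> H \<Longrightarrow> \<alpha> (x \<otimes>\<^bsub>FP I J\<^esub> y) = \<alpha> x \<otimes>\<^bsub>FP I J\<^esub> \<alpha> y"
  using iso by (auto simp: iso_def hom_def)

lemma \<alpha>_winv: 
  assumes h: "h \<in> H"
  shows "\<alpha> (winv h) = winv (\<alpha> h)"
proof -
  have "\<alpha> (winv h) \<otimes>\<^bsub>FP I J\<^esub> \<alpha> h = \<alpha> []"
    using \<alpha>_mult[OF winv_in[OF h] h] reduce_cancel_winv[of "[]" h "[]"] by (simp add: FP_mult)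
  also have "\<alpha> [] = \<one>\<^bsub>FP I J\<^esub>"
    using length_\<alpha>[OF Nil_in] by (simp add: FP_one)
  finally show ?thesis
    using FP.inv_equality \<alpha>_carrier h winv_in FP_inv by metis
qed

text \<open>Since \<open>|h\<inverse> h'| = |h| + |h'| - 2 lcp h h'\<close>, preserving lengths forces preserving common prefixes.\<close>

lemma lcp_\<alpha>:
  assumes h: "h \<in> H" and h': "h' \<in> H"
  shows "lcp (\<alpha> h) (\<alpha> h') = lcp h h'"
proof -
  have "winv h \<otimes>\<^bsub>FP I J\<^esub> h' \<in> H"
    using subgroup.m_closed[OF subgroup winv_in[OF h] h'] .
  then have "length (winv (\<alpha> h) \<otimes>\<^bsub>FP I J\<^esub> \<alpha> h') = length (winv h \<otimes>\<^bsub>FP I J\<^esub> h')"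
    using length_\<alpha> \<alpha>_mult[OF winv_in[OF h] h'] \<alpha>_winv[OF h] by metis
  then have "length (inv\<^bsub>FP I J\<^esub> \<alpha> h \<otimes>\<^bsub>FP I J\<^esub> \<alpha> h') = length (inv\<^bsub>FP I J\<^esub> h \<otimes>\<^bsub>FP I J\<^esub> h')"
    using h subset_carrier \<alpha>_carrier[OF h] by (auto simp: FP_inv)
  moreover have "h \<in> carrier (FP I J)" "h' \<in> carrier (FP I J)"
    using h h' subset_carrier by auto
  ultimately show ?thesis
    using length_inv_mult[of h I J h'] length_inv_mult[OF \<alpha>_carrier[OF h] \<alpha>_carrier[OF h']] lcp_le_length[of h h']
      lcp_le_length[of "\<alpha> h" "\<alpha> h'"] length_\<alpha>[OF h] length_\<alpha>[OF h'] by auto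
qed

text \<open>The extension of \<open>\<alpha>\<close> to prefixes of elements of \<open>H\<close>; the choice of \<open>h\<close> does not
  matter by \<open>lcp_\<alpha>\<close>.\<close>

definition prefix_ext :: "('i,'j) gen list \<Rightarrow> ('i,'j) gen list" where
  "prefix_ext p = take (length p) (\<alpha> (SOME h. h \<in> H \<and> take (length p) h = p))"

lemma prefix_ext_take:
  assumes h: "h \<in> H"
  shows "prefix_ext (take k h) = take k (\<alpha> h)"
proof -
  let ?n = "length (take k h)"
  obtain h0 where some: "(SOME h'. h' \<in> H \<and> take ?n h' = take k h) = h0"
    by simp
  have "h0 \<in> H \<and> take ?n h0 = take k h"
    unfolding some[symmetric] by (rule someI[of _ h]) (use h in simp)
  then have h0: "h0 \<in> H" "take ?n h0 = take ?n h"
    by auto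
  have "length (take ?n h0) = ?n"
    using h0(2) by simp
  then have "?n \<le> length h0"
    using min.cobounded1[of "length h0" ?n] by (simp only: length_take)
  then have "?n \<le> lcp (\<alpha> h0) (\<alpha> h)"
    using take_eq_iff_le_lcp[of ?n h0 h] lcp_\<alpha>[OF h0(1) h] \<open>?n \<le> length h0\<close> h0(2) by simp
  then have "take ?n (\<alpha> h0) = take ?n (\<alpha> h)"
    using take_eq_iff_le_lcp[of ?n "\<alpha> h0" "\<alpha> h"] \<open>?n \<le> length h0\<close> h0 length_\<alpha> h by simp
  then show ?thesis
    unfolding prefix_ext_def some using length_\<alpha>[OF h, symmetric] by simp
qed

lemma prefix_ext_mult:
  assumes PH: "prefix_closure H = carrier (FP I J)" and h: "h \<in> H" and p: "p \<in> carrier (FP I J)"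
  shows "prefix_ext (h \<otimes>\<^bsub>FP I J\<^esub> p) = \<alpha> h \<otimes>\<^bsub>FP I J\<^esub> prefix_ext p"
proof -
  obtain h' j where h': "h' \<in> H" and pj: "p = take j h'" and j: "j \<le> length h'"
    using p PH by (metis prefix_closureE take_min_length(1) min.cobounded2)
  define c where "c = lcp (winv h) h'"
  have c': "lcp (winv (\<alpha> h)) (\<alpha> h') = c"
    using lcp_\<alpha>[OF winv_in[OF h] h'] \<alpha>_winv[OF h] by (simp add: c_def)
  have r: "reduced h" "reduced h'" "reduced (\<alpha> h)" "reduced (\<alpha> h')"
    using h h' subset_carrier \<alpha>_carrier by (auto simp: FP_carrier)
  have "h \<otimes>\<^bsub>FP I J\<^esub> p = (if j \<le> c then take (length h - j) h
      else take (length h - c + (j - c)) (h \<otimes>\<^bsub>FP I J\<^esub> h'))"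
    using reduce_append_take[OF r(1,2) j] pj by (simp add: FP_mult c_def)
  moreover have "\<alpha> h \<otimes>\<^bsub>FP I J\<^esub> prefix_ext p = (if j \<le> c then take (length h - j) (\<alpha> h)
      else take (length h - c + (j - c)) (\<alpha> h \<otimes>\<^bsub>FP I J\<^esub> \<alpha> h'))"
    using reduce_append_take[OF r(3,4)] j c' length_\<alpha> h h' pj prefix_ext_take[OF h']
    by (simp add: FP_mult)
  ultimately show ?thesis
    using prefix_ext_take h subgroup.m_closed[OF subgroup h h'] \<alpha>_mult[OF h h'] by simp
qed

lemma image_prefix_ext:
  assumes PH: "prefix_closure H = carrier (FP I J)" and PK: "prefix_closure K = carrier (FP I J)"
  shows "prefix_ext ` carrier (FP I J) = carrier (FP I J)"
proof
  show "prefix_ext ` carrier (FP I J) \<subseteq> carrier (FP I J)"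
  proof
    fix y assume "y \<in> prefix_ext ` carrier (FP I J)"
    then obtain h k where "h \<in> H" "y = prefix_ext (take k h)"
      using PH by (metis imageE prefix_closureE)
    then show "y \<in> carrier (FP I J)"
      using \<alpha>_carrier by (simp add: prefix_ext_take take_in_carrier)
  qed
  show "carrier (FP I J) \<subseteq> prefix_ext ` carrier (FP I J)"
  proof
    fix y assume "y \<in> carrier (FP I J)"
    then have "y \<in> prefix_closure (\<alpha> ` H)"
      using PK bij_\<alpha> by (simp add: bij_betw_def)
    then obtain h k where "h \<in> H" "y = take k (\<alpha> h)"
      by (auto elim!: prefix_closureE)
    then show "y \<in> prefix_ext ` carrier (FP I J)"
      using PH prefix_ext_take prefix_closureI by (metis imageI)
  qed
qed

lemma equivariant_isometry_prefix_ext: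
  assumes g: "g \<in> carrier (FP I J)" and K: "K = conjugate I J g H"
    and PH: "prefix_closure H = carrier (FP I J)" and PK: "prefix_closure K = carrier (FP I J)"
  shows "equivariant_isometry I J H g \<alpha> prefix_ext"
proof
  show "prefix_ext ` carrier (FP I J) = carrier (FP I J)"
    by (rule image_prefix_ext[OF PH PK])
  show "length (prefix_ext p) = length p" if "p \<in> carrier (FP I J)" for p
  proof -
    have "p \<in> prefix_closure H"
      using that PH by simp
    then obtain h k where "h \<in> H" "p = take k h"
      by (rule prefix_closureE)
    then show ?thesis
      by (simp add: prefix_ext_take length_\<alpha>)
  qed
  show "lcp (prefix_ext p) (prefix_ext q) = lcp p q"
    if "p \<in> carrier (FP I J)" "q \<in> carrier (FP I J)" for p q
  proof -
    have "p \<in> prefix_closure H" "q \<in> prefix_closure H"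
      using that PH by simp_all
    then obtain h k h' k' where "h \<in> H" "p = take k h" "h' \<in> H" "q = take k' h'"
      by (meson prefix_closureE)
    then show ?thesis
      by (simp add: prefix_ext_take lcp_take_take lcp_\<alpha>)
  qed

  show "prefix_ext (h \<otimes>\<^bsub>FP I J\<^esub> p) = \<alpha> h \<otimes>\<^bsub>FP I J\<^esub> prefix_ext p"
    if "h \<in> H" "p \<in> carrier (FP I J)" for h p
    using prefix_ext_mult[OF PH that] .
  show "\<alpha> ` H = conjugate I J g H"
    using bij_\<alpha> K by (simp add: bij_betw_def)
qed (fact g)

end

context FP_subgroup
begin

lemma boundary_of_prefix_closure:
  assumes w: "w \<in> carrier (FP I J)" "w \<notin> prefix_closure H"
  obtains q a where "q \<in> prefix_closure H" "q @ [a] \<in> carrier (FP I J)" "q @ [a] \<notin> prefix_closure H"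
proof -
  have "\<exists>k. take k w \<notin> prefix_closure H"
    using w(2) by (intro exI[of _ "length w"]) simp
  then obtain k where k: "take k w \<notin> prefix_closure H" "\<And>i. i < k \<Longrightarrow> take i w \<in> prefix_closure H"
    unfolding exists_least_iff[of "\<lambda>k. take k w \<notin> prefix_closure H"] by blast
  have "k \<noteq> 0"
  proof
    assume "k = 0"
    then show False
      using k(1) prefix_closureI[OF Nil_in, of 0] by simp
  qed
  moreover have "k \<le> length w"
  proof (rule ccontr)
    assume "\<not> k \<le> length w"
    then show False
      using k(2)[of "length w"] w(2) by simp
  qed
  ultimately have eq: "take k w = take (k - 1) w @ [w ! (k - 1)]"
    using take_Suc_conv_app_nth[of "k - 1" w] by simp
  moreover have "take k w \<in> carrier (FP I J)"
    using take_in_carrier[OF w(1)] .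
  ultimately show ?thesis
    using that[of "take (k - 1) w" "w ! (k - 1)"] k \<open>k \<noteq> 0\<close> by simp
qed

text \<open>An element \<open>a r\<close> of \<open>q\<inverse> H q\<close> would make \<open>q a\<close> a prefix of some \<open>h q\<close>.\<close>

lemma hd_conj_boundary:
  assumes q: "q \<in> prefix_closure H" and qa: "q @ [a] \<in> carrier (FP I J)" "q @ [a] \<notin> prefix_closure H"
    and h: "h \<in> H" and r: "inv\<^bsub>FP I J\<^esub> q \<otimes>\<^bsub>FP I J\<^esub> h \<otimes>\<^bsub>FP I J\<^esub> q = a # r'"
  shows False
proof -
  have qc: "q \<in> carrier (FP I J)" and hc: "h \<in> carrier (FP I J)"
    using q h prefix_closure_subset_carrier subset_carrier by auto
  then have "h \<otimes>\<^bsub>FP I J\<^esub> q = q \<otimes>\<^bsub>FP I J\<^esub> (a # r')"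
    using r[symmetric] by (simp add: FP.m_assoc FP.mult_inv_cancel_left)
  moreover have "reduced (q @ a # r')"
  proof -
    have "a # r' \<in> carrier (FP I J)"
      using r[symmetric] qc hc by simp
    then show ?thesis
      using qa(1) reduced_append[of q "[a]"] reduced_append[of q "a # r'"] by (auto simp: FP_carrier)
  qed
  ultimately have "take (length q + 1) (h \<otimes>\<^bsub>FP I J\<^esub> q) = q @ [a]"
    by (simp add: FP_mult_reduced)
  then show False
    using qa(2) take_in_prefix_closure[OF mult_in_prefix_closure[OF h q], of "length q + 1"] by simp
qed

lemma reduced_conj_word:
  assumes "reduced r" "r \<noteq> []" "hd r \<noteq> a" "last r \<noteq> ginv a" "reduced (a # z)"
  shows "reduced (winv (a # z) @ r @ a # z)"
  using assms reduced_winv[OF assms(5)]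
  by (auto simp: reduced_append reduced_Cons hd_winv last_winv)

text \<open>Conjugating by \<open>q a z\<close>, with \<open>q a\<close> just outside the prefix closure of \<open>H\<close>, prepends
  \<open>z\<inverse> a\<inverse>\<close> and appends \<open>a z\<close> to \<open>q\<inverse> h q\<close> without cancellation.\<close>

lemma length_conj_boundary:
  assumes q: "q \<in> prefix_closure H" and qa: "q @ [a] \<in> carrier (FP I J)" "q @ [a] \<notin> prefix_closure H"
    and az: "a # z \<in> carrier (FP I J)" and h: "h \<in> H" "h \<noteq> []"
  shows "length z < length (inv\<^bsub>FP I J\<^esub> (q \<otimes>\<^bsub>FP I J\<^esub> (a # z)) \<otimes>\<^bsub>FP I J\<^esub> h \<otimes>\<^bsub>FP I J\<^esub> (q \<otimes>\<^bsub>FP I J\<^esub> (a # z)))"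
proof -
  let ?r = "inv\<^bsub>FP I J\<^esub> q \<otimes>\<^bsub>FP I J\<^esub> h \<otimes>\<^bsub>FP I J\<^esub> q"
  have qc: "q \<in> carrier (FP I J)" and hc: "h \<in> carrier (FP I J)"
    using q h prefix_closure_subset_carrier subset_carrier by auto
  then have r: "?r \<in> carrier (FP I J)" "?r \<noteq> []"
    using conj_eq_Nil_iff h(2) by auto
  have "hd ?r \<noteq> a"
    using hd_conj_boundary[OF q qa h(1)] r(2) by (metis list.collapse)
  moreover have "hd (winv ?r) \<noteq> a"
  proof -
    have "winv ?r = inv\<^bsub>FP I J\<^esub> ?r"
      using FP_inv[OF r(1)] by simp
    also have "\<dots> = inv\<^bsub>FP I J\<^esub> q \<otimes>\<^bsub>FP I J\<^esub> inv\<^bsub>FP I J\<^esub> h \<otimes>\<^bsub>FP I J\<^esub> q"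
      using qc hc by (simp add: FP.inv_mult_group FP.m_assoc)
    finally show ?thesis
      using hd_conj_boundary[OF q qa subgroup.m_inv_closed[OF subgroup h(1)]] r(2)
      by (metis list.collapse winv_eq_Nil_iff)
  qed
  ultimately have "hd ?r \<noteq> a" "last ?r \<noteq> ginv a"
    using hd_winv[OF r(2)] by auto
  moreover have "reduced ?r" "reduced (a # z)"
    using r(1) az by (simp_all add: FP_carrier)
  ultimately have red: "reduced (winv (a # z) @ ?r @ a # z)"
    using reduced_conj_word r(2) by blast
  have "inv\<^bsub>FP I J\<^esub> (q \<otimes>\<^bsub>FP I J\<^esub> (a # z)) \<otimes>\<^bsub>FP I J\<^esub> h \<otimes>\<^bsub>FP I J\<^esub> (q \<otimes>\<^bsub>FP I J\<^esub> (a # z))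
      = inv\<^bsub>FP I J\<^esub> (a # z) \<otimes>\<^bsub>FP I J\<^esub> ?r \<otimes>\<^bsub>FP I J\<^esub> (a # z)"
    using qc az hc by (simp add: FP.inv_mult_group FP.m_assoc)
  also have "\<dots> = winv (a # z) @ ?r @ a # z"
    using FP_inv[OF az] red by (simp add: FP_mult reduce_append_reduce_left reduce_reduced)
  finally show ?thesis
    by simp
qed

lemma far_conjugate:
  assumes w: "w \<in> carrier (FP I J)" "w \<notin> prefix_closure H" and gens: "\<nexists>b. gens I J = {b}"
  shows "\<exists>g\<in>carrier (FP I J). \<forall>h\<in>H. h \<noteq> [] \<longrightarrow> N < length (inv\<^bsub>FP I J\<^esub> g \<otimes>\<^bsub>FP I J\<^esub> h \<otimes>\<^bsub>FP I J\<^esub> g)"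
proof -
  obtain q a where q: "q \<in> prefix_closure H" and qa: "q @ [a] \<in> carrier (FP I J)" "q @ [a] \<notin> prefix_closure H"
    using boundary_of_prefix_closure[OF w] .
  have qc: "q \<in> carrier (FP I J)" and a: "a \<in> gens I J"
    using q qa(1) prefix_closure_subset_carrier by (auto simp: FP_carrier)
  obtain z where "set z \<subseteq> gens I J" "reduced (a # z)" "length z = N"
    using long_reduced_word[OF gens a] by blast
  then have "a # z \<in> carrier (FP I J)" "length z = N"
    using a by (auto simp: FP_carrier)
  then show ?thesis
    using length_conj_boundary[OF q qa] qc by (metis FP.m_closed)
qed

text \<open>A nontrivial \<open>h\<^sub>0 \<in> H\<close> has a counterpart of the same length in every conjugate of \<open>H\<close>, so
  no conjugate can be pushed away from the identity as in \<open>far_conjugate\<close>.\<close>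

lemma prefix_closure_conjugate:
  assumes lt: "length_transitive I J H" and nontrivial: "H \<noteq> {[]}" and gens: "\<nexists>b. gens I J = {b}"
    and g: "g \<in> carrier (FP I J)"
  shows "prefix_closure (conjugate I J g H) = carrier (FP I J)"
proof (rule ccontr)
  let ?K = "conjugate I J g H"
  interpret K: FP_subgroup I J ?K
    by (rule FP_subgroup.intro[OF conjugate_subgroup[OF g]])
  assume "prefix_closure ?K \<noteq> carrier (FP I J)"
  then obtain w where "w \<in> carrier (FP I J)" "w \<notin> prefix_closure ?K"
    using K.prefix_closure_subset_carrier by blast
  obtain h0 where h0: "h0 \<in> H" "h0 \<noteq> []"
    using nontrivial Nil_in by blast
  obtain g' where g': "g' \<in> carrier (FP I J)"
    and far: "\<forall>k\<in>?K. k \<noteq> [] \<longrightarrow> length h0 < length (inv\<^bsub>FP I J\<^esub> g' \<otimes>\<^bsub>FP I J\<^esub> k \<otimes>\<^bsub>FP I J\<^esub> g')"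
    using K.far_conjugate[OF \<open>w \<in> carrier (FP I J)\<close> \<open>w \<notin> prefix_closure ?K\<close> gens] by blast
  obtain \<alpha> where iso: "\<alpha> \<in> iso ((FP I J)\<lparr>carrier := H\<rparr>) ((FP I J)\<lparr>carrier := conjugate I J (g \<otimes>\<^bsub>FP I J\<^esub> g') H\<rparr>)"
    and len: "length (\<alpha> h0) = length h0"
    using lt g g' h0(1) by (auto simp: length_transitive_iff)
  have "\<alpha> h0 \<in> conjugate I J g' ?K"
    using iso h0(1) conjugate_conjugate[OF g g'] by (auto simp: iso_def bij_betw_def)
  then obtain k where "k \<in> ?K" "\<alpha> h0 = inv\<^bsub>FP I J\<^esub> g' \<otimes>\<^bsub>FP I J\<^esub> k \<otimes>\<^bsub>FP I J\<^esub> g'"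
    by (auto simp: conjugate_def)
  moreover have "k \<noteq> []"
    using calculation g' h0(2) len by (auto simp: conj_Nil)
  ultimately show False
    using far len by auto
qed

end

lemma (in FP_subgroup) equivariant_isometry_trivial:
  assumes "H = {[]}" "g \<in> carrier (FP I J)"
  shows "equivariant_isometry I J H g id id"
  by unfold_locales (use assms in \<open>auto simp: conjugate_def conj_Nil\<close>)

lemma (in FP_subgroup) vertex_transitive_single_generator:
  assumes gens: "gens I J = {a}" and nontrivial: "H \<noteq> {[]}"
  shows "vertex_transitive (schreier I J H)"
proof -
  obtain h where h: "h \<in> H" "h \<noteq> []"
    using nontrivial Nil_in by blast
  then have "h = [a]"
    using subset_carrier carrier_single_generator[OF gens] by auto
  then have "H = carrier (FP I J)"
    using h(1) Nil_in subset_carrier carrier_single_generator[OF gens] by auto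
  then have "C = H" if "C \<in> rcosets\<^bsub>FP I J\<^esub> H" for C
    using that rcos_const by (metis rcosetsE)
  then show ?thesis
    by (intro vertex_transitive_if_singleton) (metis schreier_simps(1))
qed

lemma (in FP_subgroup) equivariant_isometry_if_length_transitive:
  assumes lt: "length_transitive I J H" and "H \<noteq> {[]}" "\<nexists>a. gens I J = {a}"
    and g: "g \<in> carrier (FP I J)"
  shows "\<exists>\<alpha> \<phi>. equivariant_isometry I J H g \<alpha> \<phi>"
proof -
  obtain \<alpha> where iso: "\<alpha> \<in> iso ((FP I J)\<lparr>carrier := H\<rparr>) ((FP I J)\<lparr>carrier := conjugate I J g H\<rparr>)"
    and len: "\<forall>h\<in>H. length (\<alpha> h) = length h"
    using lt g by (auto simp: length_transitive_iff)
  interpret length_preserving_iso I J H "conjugate I J g H" \<alpha>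
    using iso len subgroup.subset[OF conjugate_subgroup[OF g]] by unfold_locales auto
  have "prefix_closure H = carrier (FP I J)"
    using prefix_closure_conjugate[OF assms(1-3), of "[]"] conjugate_Nil by (simp add: FP_carrier)
  then show ?thesis
    using equivariant_isometry_prefix_ext[OF g refl] prefix_closure_conjugate[OF assms] by blast
qed

theorem vertex_transitive_if_length_transitive:
  assumes H: "subgroup H (FP I J)" and lt: "length_transitive I J H"
  shows "vertex_transitive (schreier I J H)"
proof -
  interpret FP_subgroup I J H
    by (rule FP_subgroup.intro[OF H])
  consider "H = {[]}" | a where "gens I J = {a}" "H \<noteq> {[]}" | "H \<noteq> {[]}" "\<nexists>a. gens I J = {a}"
    by blast
  then show ?thesis
  proof cases
    case 1
    show ?thesis
      using equivariant_isometry_trivial[OF 1]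
      by (meson vertex_transitive_if_base equivariant_isometry.moves_base_vertex)
  next
    case 2
    then show ?thesis
      by (rule vertex_transitive_single_generator)
  next
    case 3
    then show ?thesis
      using equivariant_isometry_if_length_transitive[OF lt]
      by (meson vertex_transitive_if_base equivariant_isometry.moves_base_vertex)
  qed
qed

theorem corollary4p12:
  fixes I :: "'i set" and J :: "'j set" and H :: "('i,'j) gen list set"
  assumes "subgroup H (FP I J)"
  shows "vertex_transitive (schreier I J H) \<longleftrightarrow> length_transitive I J H"
  using length_transitive_if_vertex_transitive vertex_transitive_if_length_transitive assms by blast

end
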